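(* For integers $1\le m\le n$, $[\mathbb{Q}(x_1,\dots,x_n,\mathrm{EC}_m):\mathbb{Q}(x_1,\dots,x_n)]=2^{m-1}$, where $\mathrm{EC}_m=\mathrm{EC}_m(x_1,\dots,x_m)$.
   Context: Let $x_1,\dots,x_n$ be algebraically independent indeterminates over $\mathbb{Q}$; in an algebraic closure of $\mathbb{Q}(x_1,\dots,x_n)$ fix $y_1,\dots,y_n$ with $y_j^2=1-x_j^2$. $\mathrm{EC}_m(x_1,\dots,x_m)=\sum_{S\subseteq\{1,\dots,m\},\ |S|\text{ even}}(-1)^{|S|/2}\prod_{j\in S}y_j\prod_{j\notin S}x_j$. *)

theory Defs
  imports "HOL-Algebra.Algebraic_Closure_Type" "HOL-Algebra.Generated_Fields"
begin

text \<open>Algebraic independence over the rationals of the family x i, i in I (I finite):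
  distinct monomials in the x i are linearly independent over the rationals, i.e. no
  nonzero polynomial with rational coefficients in the variables indexed by I
  vanishes at x.\<close>
definition alg_indep_over_Q :: "(nat \<Rightarrow> 'a::field_char_0) \<Rightarrow> nat set \<Rightarrow> bool" where
  "alg_indep_over_Q x I \<longleftrightarrow>
     (\<forall>(A :: (nat \<Rightarrow> nat) set) (c :: (nat \<Rightarrow> nat) \<Rightarrow> rat).
        finite A \<longrightarrow> (\<forall>\<alpha>\<in>A. \<forall>i. i \<notin> I \<longrightarrow> \<alpha> i = 0) \<longrightarrow>
        (\<Sum>\<alpha>\<in>A. of_rat (c \<alpha>) * (\<Prod>i\<in>I. x i ^ \<alpha> i)) = 0 \<longrightarrow>
        (\<forall>\<alpha>\<in>A. c \<alpha> = 0))"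

definition EC :: "nat \<Rightarrow> (nat \<Rightarrow> 'a::comm_ring_1) \<Rightarrow> (nat \<Rightarrow> 'a) \<Rightarrow> 'a" where
  "EC m x y = (\<Sum>S\<in>{S. S \<subseteq> {1..m} \<and> even (card S)}.
      (-1) ^ (card S div 2) * (\<Prod>j\<in>S. y j) * (\<Prod>j\<in>{1..m} - S. x j))"

end

theory Submission
  imports Defs
begin

text \<open>
  Put K = Q(x_1, ..., x_n) and d_j = 1 - x_j^2 = y_j^2.  The proof has three parts.

  (1) No nonempty product of the d_j is a square in K.  Writing elements of K as quotients
      of rational polynomial expressions and singling out one variable x_j, an identity
      a^2 = (prod d_i) b^2 becomes an identity of polynomials in x_j (by algebraic
      independence), in which 1 is a root of even multiplicity on the left and of odd
      multiplicity on the right.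

  (2) For any field K containing square roots y_j of elements d_j in K with that property,
      the fields L_k = K(y_1, ..., y_k) form a tower of quadratic extensions with K-basis
      the monomials y_S (S a subset of {1..k}); each sign pattern e gives a K-automorphism
      y_j -> e_j y_j of L_k (locale quadratic_tower).

  (3) For nonzero x_j in K (locale EC_tower): EC_m is fixed by the total sign flip, so it
      lies in the span of the 2^(m-1) even monomials, which bounds [K(EC_m):K] from above;
      flipping the signs of any subset of y_2, ..., y_m gives 2^(m-1) distinct conjugates,
      all roots of the minimal polynomial, which bounds it from below.

  The main theorem instantiates (3) with K = Q(x_1, ..., x_n) using (1).
\<close>

definition monom_val :: "(nat \<Rightarrow> 'a::field_char_0) \<Rightarrow> nat set \<Rightarrow> (nat \<Rightarrow> nat) \<Rightarrow> 'a" where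
  "monom_val x J \<alpha> = (\<Prod>i\<in>J. x i ^ \<alpha> i)"

definition rat_monom_comb :: "(nat \<Rightarrow> 'a::field_char_0) \<Rightarrow> nat set \<Rightarrow> 'a \<Rightarrow> bool" where
  "rat_monom_comb x J a \<longleftrightarrow> (\<exists>A c. finite A \<and> (\<forall>\<alpha>\<in>A. \<forall>i. i \<notin> J \<longrightarrow> \<alpha> i = 0) \<and>
      a = (\<Sum>\<alpha>\<in>A. of_rat (c \<alpha>) * monom_val x J \<alpha>))"

inductive_set Qalg :: "(nat \<Rightarrow> 'a::field_char_0) \<Rightarrow> nat set \<Rightarrow> 'a set" for x J where
  Qalg_const: "of_rat q \<in> Qalg x J"
| Qalg_var: "i \<in> J \<Longrightarrow> x i \<in> Qalg x J"
| Qalg_add: "a \<in> Qalg x J \<Longrightarrow> b \<in> Qalg x J \<Longrightarrow> a + b \<in> Qalg x J"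
| Qalg_mult: "a \<in> Qalg x J \<Longrightarrow> b \<in> Qalg x J \<Longrightarrow> a * b \<in> Qalg x J"

lemma Qalg_0: "0 \<in> Qalg x J" using Qalg_const[of 0] by simp
lemma Qalg_1: "1 \<in> Qalg x J" using Qalg_const[of 1] by simp
lemma Qalg_neg: "a \<in> Qalg x J \<Longrightarrow> - a \<in> Qalg x J"
  using Qalg_mult[OF Qalg_const[of "-1"]] by simp
lemma Qalg_diff: "a \<in> Qalg x J \<Longrightarrow> b \<in> Qalg x J \<Longrightarrow> a - b \<in> Qalg x J"
  unfolding diff_conv_add_uminus by (intro Qalg_add Qalg_neg)
lemma Qalg_sum: "finite S \<Longrightarrow> (\<And>i. i \<in> S \<Longrightarrow> f i \<in> Qalg x J) \<Longrightarrow> sum f S \<in> Qalg x J"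
  by (induction S rule: finite_induct) (auto intro: Qalg_0 Qalg_add)
lemma Qalg_prod: "finite S \<Longrightarrow> (\<And>i. i \<in> S \<Longrightarrow> f i \<in> Qalg x J) \<Longrightarrow> prod f S \<in> Qalg x J"
  by (induction S rule: finite_induct) (auto intro: Qalg_1 Qalg_mult)

lemma monom_val_add: "monom_val x J (\<lambda>i. \<alpha> i + \<beta> i) = monom_val x J \<alpha> * monom_val x J \<beta>"
  unfolding monom_val_def by (simp add: power_add prod.distrib)

lemma monom_val_upd:
  assumes "finite I" "j \<in> I"
  shows "monom_val x I (\<alpha>(j := k)) = monom_val x (I - {j}) \<alpha> * x j ^ k"
proof -
  have "monom_val x I (\<alpha>(j := k)) = x j ^ k * (\<Prod>i\<in>I - {j}. x i ^ (\<alpha>(j := k)) i)"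
    unfolding monom_val_def using assms by (simp add: prod.remove)
  also have "(\<Prod>i\<in>I - {j}. x i ^ (\<alpha>(j := k)) i) = monom_val x (I - {j}) \<alpha>"
    unfolding monom_val_def by (rule prod.cong) auto
  finally show ?thesis by (simp only: mult.commute)
qed

lemma rat_monom_comb_add:
  assumes "rat_monom_comb x J a" and "rat_monom_comb x J b"
  shows "rat_monom_comb x J (a + b)"
proof -
  from assms obtain A c B d where
    A: "finite A" "\<forall>\<alpha>\<in>A. \<forall>i. i \<notin> J \<longrightarrow> \<alpha> i = 0" "a = (\<Sum>\<alpha>\<in>A. of_rat (c \<alpha>) * monom_val x J \<alpha>)" and
    B: "finite B" "\<forall>\<alpha>\<in>B. \<forall>i. i \<notin> J \<longrightarrow> \<alpha> i = 0" "b = (\<Sum>\<alpha>\<in>B. of_rat (d \<alpha>) * monom_val x J \<alpha>)"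
    unfolding rat_monom_comb_def by blast
  let ?cA = "\<lambda>\<alpha>. if \<alpha> \<in> A then c \<alpha> else 0" and ?dB = "\<lambda>\<alpha>. if \<alpha> \<in> B then d \<alpha> else 0"
  have "(\<Sum>\<alpha>\<in>A \<union> B. of_rat (?cA \<alpha>) * monom_val x J \<alpha>) = a"
    unfolding A(3) by (rule sum.mono_neutral_cong_right) (use A B in auto)
  moreover have "(\<Sum>\<alpha>\<in>A \<union> B. of_rat (?dB \<alpha>) * monom_val x J \<alpha>) = b"
    unfolding B(3) by (rule sum.mono_neutral_cong_right) (use A B in auto)
  ultimately have "a + b = (\<Sum>\<alpha>\<in>A \<union> B. of_rat (?cA \<alpha> + ?dB \<alpha>) * monom_val x J \<alpha>)"
    by (simp add: of_rat_add distrib_right sum.distrib)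
  thus ?thesis unfolding rat_monom_comb_def
    by (intro exI[of _ "A \<union> B"] exI[of _ "\<lambda>\<alpha>. ?cA \<alpha> + ?dB \<alpha>"]) (use A B in auto)
qed

lemma rat_monom_comb_mult:
  assumes "rat_monom_comb x J a" and "rat_monom_comb x J b"
  shows "rat_monom_comb x J (a * b)"
proof -
  from assms obtain A c B d where
    A: "finite A" "\<forall>\<alpha>\<in>A. \<forall>i. i \<notin> J \<longrightarrow> \<alpha> i = 0" "a = (\<Sum>\<alpha>\<in>A. of_rat (c \<alpha>) * monom_val x J \<alpha>)" and
    B: "finite B" "\<forall>\<alpha>\<in>B. \<forall>i. i \<notin> J \<longrightarrow> \<alpha> i = 0" "b = (\<Sum>\<alpha>\<in>B. of_rat (d \<alpha>) * monom_val x J \<alpha>)"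
    unfolding rat_monom_comb_def by blast
  define g where "g p = (\<lambda>i. fst p i + snd p i)" for p :: "(nat \<Rightarrow> nat) \<times> (nat \<Rightarrow> nat)"
  define h where "h p = c (fst p) * d (snd p)" for p
  define f where "f p = of_rat (h p) * monom_val x J (g p)" for p
  define c' where "c' \<gamma> = (\<Sum>p\<in>{p. p \<in> A \<times> B \<and> g p = \<gamma>}. h p)" for \<gamma>
  have "a * b = (\<Sum>\<alpha>\<in>A. \<Sum>\<beta>\<in>B. of_rat (c \<alpha>) * monom_val x J \<alpha> * (of_rat (d \<beta>) * monom_val x J \<beta>))"
    unfolding A(3) B(3) by (rule sum_product)
  also have "\<dots> = (\<Sum>p\<in>A \<times> B. f p)"
    unfolding f_def h_def g_def sum.cartesian_product
    by (simp add: monom_val_add of_rat_mult mult_ac split_beta)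
  also have "\<dots> = (\<Sum>\<gamma>\<in>g ` (A \<times> B). \<Sum>p\<in>{p. p \<in> A \<times> B \<and> g p = \<gamma>}. f p)"
    by (rule sum.group[symmetric]) (use A B in auto)
  also have "\<dots> = (\<Sum>\<gamma>\<in>g ` (A \<times> B). of_rat (c' \<gamma>) * monom_val x J \<gamma>)"
    unfolding c'_def f_def of_rat_sum sum_distrib_right by (rule sum.cong) auto
  finally show ?thesis unfolding rat_monom_comb_def
    by (intro exI[of _ "g ` (A \<times> B)"] exI[of _ c']) (use A B in \<open>auto simp: g_def\<close>)
qed

lemma Qalg_rat_monom_comb:
  assumes "finite J" and "a \<in> Qalg x J"
  shows "rat_monom_comb x J a"
  using assms(2)
proof (induction rule: Qalg.induct)
  case (Qalg_const q)
  show ?case unfolding rat_monom_comb_def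
    by (intro exI[of _ "{\<lambda>_. 0}"] exI[of _ "\<lambda>_. q"]) (simp add: monom_val_def)
next
  case (Qalg_var i)
  have "monom_val x J (\<lambda>l. if l = i then 1 else 0) = (\<Prod>l\<in>J. if l = i then x l else 1)"
    unfolding monom_val_def by (rule prod.cong) auto
  also have "\<dots> = x i" using Qalg_var assms(1) by (simp add: prod.delta)
  finally show ?case unfolding rat_monom_comb_def
    by (intro exI[of _ "{\<lambda>l. if l = i then 1 else 0}"] exI[of _ "\<lambda>_. 1"]) (use Qalg_var in auto)
next
  case (Qalg_add a b)
  show ?case by (rule rat_monom_comb_add[OF Qalg_add.IH])
next
  case (Qalg_mult a b)
  show ?case by (rule rat_monom_comb_mult[OF Qalg_mult.IH])
qed

definition Qalg_poly :: "(nat \<Rightarrow> 'a::field_char_0) \<Rightarrow> nat set \<Rightarrow> 'a poly set" where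
  "Qalg_poly x J = {p. \<forall>k. coeff p k \<in> Qalg x J}"

lemma Qalg_poly_add: "p \<in> Qalg_poly x J \<Longrightarrow> q \<in> Qalg_poly x J \<Longrightarrow> p + q \<in> Qalg_poly x J"
  by (simp add: Qalg_poly_def Qalg_add)
lemma Qalg_poly_diff: "p \<in> Qalg_poly x J \<Longrightarrow> q \<in> Qalg_poly x J \<Longrightarrow> p - q \<in> Qalg_poly x J"
  by (simp add: Qalg_poly_def Qalg_diff)
lemma Qalg_poly_mult: "p \<in> Qalg_poly x J \<Longrightarrow> q \<in> Qalg_poly x J \<Longrightarrow> p * q \<in> Qalg_poly x J"
  by (auto simp: Qalg_poly_def coeff_mult intro!: Qalg_sum Qalg_mult)
lemma Qalg_poly_const: "c \<in> Qalg x J \<Longrightarrow> [:c:] \<in> Qalg_poly x J"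
  by (auto simp: Qalg_poly_def coeff_pCons Qalg_0 split: nat.split)
lemma Qalg_poly_X: "[:0, 1:] \<in> Qalg_poly x J"
  by (auto simp: Qalg_poly_def coeff_pCons Qalg_0 Qalg_1 split: nat.split)
lemma Qalg_poly_one_minus_X_sq: "[:1, 0, -1:] \<in> Qalg_poly x J"
  by (auto simp: Qalg_poly_def coeff_pCons Qalg_0 Qalg_1 Qalg_neg split: nat.split)

lemma alg_indep_over_Q_reindex:
  assumes ind: "alg_indep_over_Q x I" and fin: "finite S" and inj: "inj_on f S"
    and supp: "\<And>s i. s \<in> S \<Longrightarrow> i \<notin> I \<Longrightarrow> f s i = 0"
    and zero: "(\<Sum>s\<in>S. of_rat (c s) * monom_val x I (f s)) = 0"
    and s: "s \<in> S"
  shows "c s = 0"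
proof -
  define c' where "c' \<beta> = c (the_inv_into S f \<beta>)" for \<beta>
  have c'f: "c' (f s) = c s" if "s \<in> S" for s
    unfolding c'_def using the_inv_into_f_f[OF inj that] by simp
  have "(\<Sum>\<beta>\<in>f ` S. of_rat (c' \<beta>) * (\<Prod>i\<in>I. x i ^ \<beta> i)) =
        (\<Sum>s\<in>S. of_rat (c' (f s)) * monom_val x I (f s))"
    unfolding monom_val_def by (rule sum.reindex_cong[OF inj refl refl])
  also have "\<dots> = 0"
    unfolding zero[symmetric] by (rule sum.cong) (simp_all add: c'f)
  finally have sum0: "(\<Sum>\<beta>\<in>f ` S. of_rat (c' \<beta>) * (\<Prod>i\<in>I. x i ^ \<beta> i)) = 0" .
  have supp': "\<forall>\<beta>\<in>f ` S. \<forall>i. i \<notin> I \<longrightarrow> \<beta> i = 0" using supp by auto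
  have "\<forall>\<beta>\<in>f ` S. c' \<beta> = 0"
    using ind unfolding alg_indep_over_Q_def
    by (elim allE[of _ "f ` S"] allE[of _ c']) (use fin supp' sum0 in simp)
  thus ?thesis using c'f[OF s] s by auto
qed

text \<open>Transcendence of one variable over the others: if x j is a root of a polynomial whose
  coefficients lie in Q[x i : i in I - {j}], the polynomial vanishes.\<close>
lemma Qalg_poly_root_eq_0:
  fixes x :: "nat \<Rightarrow> 'a::field_char_0"
  assumes fin: "finite I" and jI: "j \<in> I" and ind: "alg_indep_over_Q x I"
    and coeffs: "p \<in> Qalg_poly x (I - {j})" and root: "poly p (x j) = 0"
  shows "p = 0"
proof -
  define J where "J = I - {j}"
  have "rat_monom_comb x J (coeff p k)" for k
    unfolding J_def by (rule Qalg_rat_monom_comb) (use fin coeffs in \<open>simp_all add: Qalg_poly_def\<close>)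
  hence "\<forall>k. \<exists>A c. finite A \<and> (\<forall>\<alpha>\<in>A. \<forall>i. i \<notin> J \<longrightarrow> \<alpha> i = 0) \<and>
      coeff p k = (\<Sum>\<alpha>\<in>A. of_rat (c \<alpha>) * monom_val x J \<alpha>)"
    unfolding rat_monom_comb_def by blast
  then obtain A where "\<forall>k. \<exists>c. finite (A k) \<and> (\<forall>\<alpha>\<in>A k. \<forall>i. i \<notin> J \<longrightarrow> \<alpha> i = 0) \<and>
      coeff p k = (\<Sum>\<alpha>\<in>A k. of_rat (c \<alpha>) * monom_val x J \<alpha>)"
    by (rule choice[THEN exE])
  then obtain c where "\<forall>k. finite (A k) \<and> (\<forall>\<alpha>\<in>A k. \<forall>i. i \<notin> J \<longrightarrow> \<alpha> i = 0) \<and>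
      coeff p k = (\<Sum>\<alpha>\<in>A k. of_rat (c k \<alpha>) * monom_val x J \<alpha>)"
    by (rule choice[THEN exE])
  hence A: "\<And>k. finite (A k)" "\<And>k \<alpha> i. \<alpha> \<in> A k \<Longrightarrow> i \<notin> J \<Longrightarrow> \<alpha> i = 0"
     "\<And>k. coeff p k = (\<Sum>\<alpha>\<in>A k. of_rat (c k \<alpha>) * monom_val x J \<alpha>)"
    by auto
  have jJ: "j \<notin> J" by (simp add: J_def)
  text \<open>The pair (k, alpha) stands for the monomial x j ^ k times the J-monomial alpha.\<close>
  define S where "S = Sigma {..degree p} A"
  define f where "f q = (snd q) (j := fst q)" for q :: "nat \<times> (nat \<Rightarrow> nat)"
  have finS: "finite S" unfolding S_def using A(1) by auto
  have inj: "inj_on f S"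
  proof (rule inj_onI)
    fix q q' assume q: "q \<in> S" "q' \<in> S" "f q = f q'"
    obtain k \<alpha> k' \<alpha>' where qq: "q = (k, \<alpha>)" "q' = (k', \<alpha>')" by fastforce
    have "\<alpha> j = 0" "\<alpha>' j = 0" using q qq A(2) jJ unfolding S_def by auto
    moreover have "k = k'" using q(3) unfolding qq f_def by (metis fun_upd_same snd_conv fst_conv)
    moreover have "\<alpha>(j := k) = \<alpha>'(j := k')" using q(3) unfolding qq f_def by simp
    ultimately have "\<alpha> = \<alpha>'" by (metis fun_upd_triv fun_upd_upd)
    with \<open>k = k'\<close> show "q = q'" using qq by simp
  qed
  have "(\<Sum>q\<in>S. of_rat (c (fst q) (snd q)) * monom_val x I (f q)) =
        (\<Sum>q\<in>S. of_rat (c (fst q) (snd q)) * (monom_val x J (snd q) * x j ^ fst q))"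
    unfolding f_def J_def by (rule sum.cong[OF refl]) (simp add: monom_val_upd[OF fin jI])
  also have "\<dots> = (\<Sum>k\<le>degree p. \<Sum>\<alpha>\<in>A k. of_rat (c k \<alpha>) * (monom_val x J \<alpha> * x j ^ k))"
    unfolding S_def using sum.Sigma[of "{..degree p}" A "\<lambda>k \<alpha>. of_rat (c k \<alpha>) * (monom_val x J \<alpha> * x j ^ k)", symmetric] A(1)
    by (simp add: split_beta)
  also have "\<dots> = poly p (x j)"
    unfolding poly_altdef A(3) sum_distrib_right by (simp add: mult_ac)
  finally have zero: "(\<Sum>q\<in>S. of_rat (c (fst q) (snd q)) * monom_val x I (f q)) = 0"
    using root by simp
  have supp: "f q i = 0" if "q \<in> S" "i \<notin> I" for q i
    using that A(2) jI unfolding S_def f_def J_def by auto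
  have "coeff p k = 0" for k
  proof (cases "k \<le> degree p")
    case True
    have "c k \<alpha> = 0" if "\<alpha> \<in> A k" for \<alpha>
      using alg_indep_over_Q_reindex[OF ind finS inj supp zero, where s = "(k, \<alpha>)"] True that
      by (simp add: S_def)
    thus ?thesis unfolding A(3) by simp
  qed (simp add: coeff_eq_0)
  thus "p = 0" by (simp add: poly_eq_iff)
qed

lemma Qalg_as_poly:
  assumes "j \<in> I" and "a \<in> Qalg x I"
  shows "\<exists>p \<in> Qalg_poly x (I - {j}). a = poly p (x j)"
  using assms(2)
proof (induction rule: Qalg.induct)
  case (Qalg_const q)
  show ?case using Qalg_poly_const[OF Qalg.Qalg_const[of q]] by force
next
  case (Qalg_var i)
  show ?case
  proof (cases "i = j")
    case True
    thus ?thesis using Qalg_poly_X by force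
  next
    case False
    hence "x i \<in> Qalg x (I - {j})" using Qalg_var by (auto intro: Qalg.Qalg_var)
    thus ?thesis using Qalg_poly_const by force
  qed
next
  case (Qalg_add a b)
  thus ?case using Qalg_poly_add by force
next
  case (Qalg_mult a b)
  thus ?case using Qalg_poly_mult by force
qed

lemma x_nonzero:
  fixes x :: "nat \<Rightarrow> 'a::field_char_0"
  assumes "finite I" "i \<in> I" "alg_indep_over_Q x I"
  shows "x i \<noteq> 0"
proof
  assume "x i = 0"
  hence "[:0, 1:] = (0 :: 'a poly)"
    by (intro Qalg_poly_root_eq_0[OF assms Qalg_poly_X]) simp
  thus False by simp
qed

lemma one_minus_sq_nonzero:
  fixes x :: "nat \<Rightarrow> 'a::field_char_0"
  assumes "finite I" "i \<in> I" "alg_indep_over_Q x I"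
  shows "1 - x i ^ 2 \<noteq> 0"
proof
  assume "1 - x i ^ 2 = 0"
  hence "[:1, 0, -1:] = (0 :: 'a poly)"
    by (intro Qalg_poly_root_eq_0[OF assms Qalg_poly_one_minus_X_sq]) (simp add: power2_eq_square)
  thus False by simp
qed

text \<open>1 is a simple root of c (1 - X^2) for c nonzero; this parity of multiplicities is what
  prevents such a polynomial from being c' times a square.\<close>
lemma order_one_minus_X_sq:
  assumes "c \<noteq> (0::'a::field_char_0)"
  shows "order 1 ([:1, 0, -1:] * [:c:]) = 1"
proof -
  have split: "[:1, 0, -1:] = - ([:1, 1:] * [:-1, 1::'a:])" by simp
  have "order 1 [:1, 1::'a:] = 0" by (rule order_0I) simp
  moreover have "order 1 [:-1, 1::'a:] = 1" using order_power_n_n[of "1::'a" 1] by simp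
  moreover have "order 1 [:c:] = 0" using assms by (intro order_0I) simp
  ultimately show ?thesis unfolding split using assms
    by (simp add: order_mult order_uminus del: mult_pCons_left mult_pCons_right)
qed

text \<open>For nonempty T, no product of the 1 - x i ^ 2, i in T, is a square of a quotient of
  elements of Q[x i : i in I]: viewed as polynomials in x j (j in T) the two sides of
  a ^ 2 = D * b ^ 2 have 1 as root of even, resp. odd, multiplicity.\<close>
lemma prod_one_minus_sq_not_square_Qalg:
  fixes x :: "nat \<Rightarrow> 'a::field_char_0"
  assumes fin: "finite I" and ind: "alg_indep_over_Q x I" and TI: "T \<subseteq> I" and jT: "j \<in> T"
    and a: "a \<in> Qalg x I" and b: "b \<in> Qalg x I" and bnz: "b \<noteq> 0"
  shows "a ^ 2 \<noteq> (\<Prod>i\<in>T. 1 - x i ^ 2) * b ^ 2"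
proof
  assume eq: "a ^ 2 = (\<Prod>i\<in>T. 1 - x i ^ 2) * b ^ 2"
  have jI: "j \<in> I" using TI jT by auto
  have finT: "finite T" using fin TI finite_subset by auto
  obtain pa where pa: "pa \<in> Qalg_poly x (I - {j})" "a = poly pa (x j)"
    using Qalg_as_poly[OF jI a] by blast
  obtain pb where pb: "pb \<in> Qalg_poly x (I - {j})" "b = poly pb (x j)"
    using Qalg_as_poly[OF jI b] by blast
  define c where "c = (\<Prod>i\<in>T - {j}. 1 - x i ^ 2)"
  have c: "c \<in> Qalg x (I - {j})" unfolding c_def using finT TI
    by (intro Qalg_prod) (auto intro!: Qalg_diff Qalg_1 Qalg_mult Qalg_var simp: power2_eq_square)
  have cnz: "c \<noteq> 0" unfolding c_def using one_minus_sq_nonzero[OF fin _ ind] finT TI by auto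
  define pD where "pD = [:1, 0, -1:] * [:c:]"
  have "(\<Prod>i\<in>T. 1 - x i ^ 2) = (1 - x j ^ 2) * c"
    unfolding c_def using finT jT by (simp add: prod.remove)
  hence pD_val: "poly pD (x j) = (\<Prod>i\<in>T. 1 - x i ^ 2)"
    unfolding pD_def by (simp add: power2_eq_square algebra_simps)
  have "pa ^ 2 - pD * pb ^ 2 \<in> Qalg_poly x (I - {j})" unfolding pD_def power2_eq_square
    by (intro Qalg_poly_diff Qalg_poly_mult pa(1) pb(1) Qalg_poly_one_minus_X_sq Qalg_poly_const c)
  moreover have "poly (pa ^ 2 - pD * pb ^ 2) (x j) = 0" using eq pa(2) pb(2) pD_val by simp
  ultimately have "pa ^ 2 - pD * pb ^ 2 = 0"
    using Qalg_poly_root_eq_0[OF fin jI ind] by blast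
  hence eqp: "pa ^ 2 = pD * pb ^ 2" by simp
  have pbnz: "pb \<noteq> 0" using bnz pb(2) by auto
  have pDnz: "pD \<noteq> 0" unfolding pD_def using cnz by simp
  have panz: "pa \<noteq> 0" using eqp pbnz pDnz by auto
  have "order 1 (pa ^ 2) = 2 * order 1 pa"
    using panz by (simp add: power2_eq_square order_mult)
  moreover have "order 1 pD = 1" unfolding pD_def by (rule order_one_minus_X_sq[OF cnz])
  hence "order 1 (pD * pb ^ 2) = 1 + 2 * order 1 pb"
    using pbnz pDnz by (simp add: order_mult power2_eq_square)
  ultimately show False using arg_cong[OF eqp, of "order 1"] by presburger
qed

abbreviation RR where "RR \<equiv> (ring_of_type_algebra :: 'a::field ring)"

lemma RR_simps [simp]:
  "carrier (RR::'a::field ring) = UNIV"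
  "a \<oplus>\<^bsub>(RR::'a ring)\<^esub> b = a + b"
  "a \<otimes>\<^bsub>(RR::'a ring)\<^esub> b = a * b"
  "\<zero>\<^bsub>(RR::'a ring)\<^esub> = 0"
  "\<one>\<^bsub>(RR::'a ring)\<^esub> = 1"
  by (simp_all add: ring_of_type_algebra_def)

lemma RR_a_inv [simp]: "\<ominus>\<^bsub>(RR::'a::field ring)\<^esub> a = - a"
proof -
  interpret field "RR::'a ring" by (rule field_from_type_algebra)
  have "a \<oplus>\<^bsub>RR\<^esub> \<ominus>\<^bsub>RR\<^esub> a = \<zero>\<^bsub>RR\<^esub>" by (rule r_neg) simp
  thus ?thesis by (simp add: add_eq_0_iff)
qed

lemma RR_inv: "a \<noteq> 0 \<Longrightarrow> inv\<^bsub>(RR::'a::field ring)\<^esub> a = inverse a"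
proof -
  assume a: "a \<noteq> 0"
  interpret field "RR::'a ring" by (rule field_from_type_algebra)
  have "a \<otimes>\<^bsub>RR\<^esub> inv\<^bsub>RR\<^esub> a = \<one>\<^bsub>RR\<^esub>" by (rule Units_r_inv) (simp add: a field_Units)
  thus ?thesis using a by (metis RR_simps(3,5) inverse_unique)
qed

lemma RR_pow [simp]: "a [^]\<^bsub>(RR::'a::field ring)\<^esub> (k::nat) = a ^ k"
proof -
  interpret field "RR::'a ring" by (rule field_from_type_algebra)
  show ?thesis by (induction k) (simp_all add: mult.commute)
qed

lemma generate_field_quotient:
  fixes x :: "nat \<Rightarrow> 'a::field_char_0"
  assumes "h \<in> generate_field RR (x ` I)"
  shows "\<exists>a b. a \<in> Qalg x I \<and> b \<in> Qalg x I \<and> b \<noteq> 0 \<and> h = a / b"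
  using assms
proof (induction rule: generate_field.induct)
  case one
  show ?case by (intro exI[of _ 1]) (simp add: Qalg_1)
next
  case (incl h)
  then obtain i where "i \<in> I" "h = x i" by auto
  thus ?case by (intro exI[of _ "x i"] exI[of _ 1]) (auto simp: Qalg_1 intro: Qalg_var)
next
  case (a_inv h)
  then obtain a b where "a \<in> Qalg x I" "b \<in> Qalg x I" "b \<noteq> 0" "h = a / b" by blast
  thus ?case by (intro exI[of _ "- a"] exI[of _ b]) (auto intro: Qalg_neg)
next
  case (m_inv h)
  then obtain a b where ab: "a \<in> Qalg x I" "b \<in> Qalg x I" "b \<noteq> 0" "h = a / b" by blast
  have "h \<noteq> 0" using m_inv by simp
  thus ?case using ab by (intro exI[of _ b] exI[of _ a]) (auto simp: RR_inv)
next
  case (eng_add h1 h2)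
  then obtain a b c d where "a \<in> Qalg x I" "b \<in> Qalg x I" "b \<noteq> 0" "h1 = a / b"
    and "c \<in> Qalg x I" "d \<in> Qalg x I" "d \<noteq> 0" "h2 = c / d" by blast
  thus ?case by (intro exI[of _ "a * d + c * b"] exI[of _ "b * d"])
      (auto intro!: Qalg_add Qalg_mult simp: field_simps)
next
  case (eng_mult h1 h2)
  then obtain a b c d where "a \<in> Qalg x I" "b \<in> Qalg x I" "b \<noteq> 0" "h1 = a / b"
    and "c \<in> Qalg x I" "d \<in> Qalg x I" "d \<noteq> 0" "h2 = c / d" by blast
  thus ?case by (intro exI[of _ "a * c"] exI[of _ "b * d"]) (auto intro!: Qalg_mult)
qed

lemma prod_one_minus_sq_not_square:
  fixes x :: "nat \<Rightarrow> 'a::field_char_0"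
  assumes fin: "finite I" and ind: "alg_indep_over_Q x I" and TI: "T \<subseteq> I" and Tne: "T \<noteq> {}"
    and u: "u \<in> generate_field RR (x ` I)"
  shows "u ^ 2 \<noteq> (\<Prod>i\<in>T. 1 - x i ^ 2)"
proof
  assume eq: "u ^ 2 = (\<Prod>i\<in>T. 1 - x i ^ 2)"
  obtain a b where ab: "a \<in> Qalg x I" "b \<in> Qalg x I" "b \<noteq> 0" "u = a / b"
    using generate_field_quotient[OF u] by blast
  obtain j where "j \<in> T" using Tne by auto
  have "a ^ 2 = (\<Prod>i\<in>T. 1 - x i ^ 2) * b ^ 2"
    using eq ab(3,4) by (simp add: field_simps power2_eq_square)
  thus False using prod_one_minus_sq_not_square_Qalg[OF fin ind TI \<open>j \<in> T\<close> ab(1-3)] by blast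
qed

definition field_closed :: "'a::field set \<Rightarrow> bool" where
  "field_closed F \<longleftrightarrow> 0 \<in> F \<and> 1 \<in> F \<and> (\<forall>a\<in>F. \<forall>b\<in>F. a + b \<in> F \<and> a * b \<in> F) \<and>
     (\<forall>a\<in>F. - a \<in> F) \<and> (\<forall>a\<in>F. inverse a \<in> F)"

lemma field_closedD:
  assumes "field_closed F"
  shows fc_0: "0 \<in> F" and fc_1: "1 \<in> F"
    and fc_add: "a \<in> F \<Longrightarrow> b \<in> F \<Longrightarrow> a + b \<in> F"
    and fc_mult: "a \<in> F \<Longrightarrow> b \<in> F \<Longrightarrow> a * b \<in> F"
    and fc_neg: "a \<in> F \<Longrightarrow> - a \<in> F"
    and fc_inverse: "a \<in> F \<Longrightarrow> inverse a \<in> F"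
  using assms unfolding field_closed_def by auto

lemma fc_diff: "field_closed F \<Longrightarrow> a \<in> F \<Longrightarrow> b \<in> F \<Longrightarrow> a - b \<in> F"
  using fc_add[of F a "- b"] fc_neg[of F b] by simp
lemma fc_divide: "field_closed F \<Longrightarrow> a \<in> F \<Longrightarrow> b \<in> F \<Longrightarrow> a / b \<in> F"
  using fc_mult[of F a "inverse b"] fc_inverse[of F b] by (simp add: divide_inverse)
lemma fc_power: "field_closed F \<Longrightarrow> a \<in> F \<Longrightarrow> a ^ k \<in> F"
  by (induction k) (auto intro: fc_1 fc_mult)
lemma fc_sum:
  assumes "field_closed F" shows "finite S \<Longrightarrow> (\<And>i. i \<in> S \<Longrightarrow> f i \<in> F) \<Longrightarrow> sum f S \<in> F"
  by (induction S rule: finite_induct) (auto intro: fc_0[OF assms] fc_add[OF assms])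
lemma fc_prod:
  assumes "field_closed F" shows "finite S \<Longrightarrow> (\<And>i. i \<in> S \<Longrightarrow> f i \<in> F) \<Longrightarrow> prod f S \<in> F"
  by (induction S rule: finite_induct) (auto intro: fc_1[OF assms] fc_mult[OF assms])

lemma field_closed_subring: "field_closed F \<Longrightarrow> subring F (RR::'a::field ring)"
proof -
  assume F: "field_closed F"
  interpret field "RR::'a ring" by (rule field_from_type_algebra)
  show ?thesis by (rule subringI) (simp_all add: fc_1[OF F] fc_neg[OF F] fc_mult[OF F] fc_add[OF F])
qed

lemma subfield_iff_field_closed: "subfield F (RR::'a::field ring) \<longleftrightarrow> field_closed F"
proof
  interpret field "RR::'a ring" by (rule field_from_type_algebra)
  assume sub: "subfield F RR"
  have inv: "inverse a \<in> F" if "a \<in> F" for a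
  proof (cases "a = 0")
    case False
    thus ?thesis using subfield_m_inv(1)[OF sub, of a] that by (simp add: RR_inv)
  qed (use subringE(2)[OF subfieldE(1)[OF sub]] in simp)
  show "field_closed F" unfolding field_closed_def
    using subringE[OF subfieldE(1)[OF sub]] inv by auto
next
  interpret field "RR::'a ring" by (rule field_from_type_algebra)
  assume F: "field_closed F"
  show "subfield F RR"
    by (rule subfieldI'[OF field_closed_subring[OF F]]) (simp add: RR_inv fc_inverse[OF F])
qed

text \<open>The tower K = L 0, L (k + 1) = L k + L k * y (k + 1); under the hypotheses below
  L k = K(y 1, ..., y k).\<close>
primrec tower :: "'a::field set \<Rightarrow> (nat \<Rightarrow> 'a) \<Rightarrow> nat \<Rightarrow> 'a set" where
  "tower K y 0 = K"
| "tower K y (Suc k) = {a + b * y (Suc k) | a b. a \<in> tower K y k \<and> b \<in> tower K y k}"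

definition ymon :: "(nat \<Rightarrow> 'a::field) \<Rightarrow> nat set \<Rightarrow> 'a" where
  "ymon y S = (\<Prod>j\<in>S. y j)"

lemma sum_Pow_Suc:
  "(\<Sum>S\<in>Pow {1..Suc k}. f S) = (\<Sum>S\<in>Pow {1..k}. f S) + (\<Sum>S\<in>Pow {1..k}. f (insert (Suc k) S))"
proof -
  have e: "{1..Suc k} = insert (Suc k) {1..k}" by auto
  have inj: "inj_on (insert (Suc k)) (Pow {1..k})"
    by (rule inj_onI) (metis Diff_insert_absorb PowD atLeastAtMost_iff not_less_eq_eq order_refl subsetD)
  have disj: "Pow {1..k} \<inter> insert (Suc k) ` Pow {1..k} = {}" by auto
  show ?thesis unfolding e Pow_insert
    by (subst sum.union_disjoint, simp, simp, rule disj, subst sum.reindex[OF inj], simp add: comp_def)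
qed

lemma ymon_insert: "S \<subseteq> {1..k} \<Longrightarrow> ymon y (insert (Suc k) S) = y (Suc k) * ymon y S"
  unfolding ymon_def by (subst prod.insert) (auto intro: finite_subset)

text \<open>A multiquadratic tower: y j is a square root of d j in K, and no nonempty product of the
  d j is a square in K.  Then [L n : K] = 2 ^ n with basis the monomials y S.\<close>
locale quadratic_tower =
  fixes K :: "'a::field_char_0 set" and d y :: "nat \<Rightarrow> 'a" and n :: nat
  assumes K_field: "field_closed K"
    and d_in_K: "j \<in> {1..n} \<Longrightarrow> d j \<in> K"
    and y_sq: "j \<in> {1..n} \<Longrightarrow> y j ^ 2 = d j"
    and prod_d_not_square: "T \<subseteq> {1..n} \<Longrightarrow> T \<noteq> {} \<Longrightarrow> u \<in> K \<Longrightarrow> u ^ 2 \<noteq> (\<Prod>i\<in>T. d i)"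
begin

abbreviation L where "L \<equiv> tower K y"

lemma tower_Suc_iff: "u \<in> L (Suc k) \<longleftrightarrow> (\<exists>a b. a \<in> L k \<and> b \<in> L k \<and> u = a + b * y (Suc k))"
  by auto

lemma zero_in_tower: "0 \<in> L k"
proof (induction k)
  case (Suc k)
  have "(0::'a) = 0 + 0 * y (Suc k)" by simp
  thus ?case using Suc unfolding tower_Suc_iff by blast
qed (simp add: fc_0[OF K_field])

lemma tower_mono: "k \<le> k' \<Longrightarrow> L k \<subseteq> L k'"
proof (induction k' rule: dec_induct)
  case (step k')
  have "a \<in> L (Suc k')" if "a \<in> L k'" for a
    using that zero_in_tower unfolding tower_Suc_iff by (intro exI[of _ a] exI[of _ 0]) auto
  thus ?case using step by blast
qed simp

lemma K_sub_tower: "K \<subseteq> L k"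
  using tower_mono[of 0 k] by simp

lemma prod_d_in_K: "T \<subseteq> {1..n} \<Longrightarrow> (\<Prod>i\<in>T. d i) \<in> K"
  using finite_subset[of T "{1..n}"] d_in_K by (intro fc_prod[OF K_field]) auto

text \<open>The invariant of the tower: products of the d i that involve some index beyond k are
  not squares in L k.\<close>
definition nonsquare_beyond :: "nat \<Rightarrow> bool" where
  "nonsquare_beyond k \<longleftrightarrow>
     (\<forall>T u. T \<subseteq> {1..n} \<longrightarrow> (\<exists>j\<in>T. k < j) \<longrightarrow> u \<in> L k \<longrightarrow> u ^ 2 \<noteq> (\<Prod>i\<in>T. d i))"

lemma nonsquare_beyond_single:
  assumes "nonsquare_beyond k" "s \<in> {1..n}" "k < s" "u \<in> L k"
  shows "u ^ 2 \<noteq> d s"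
  using assms(1)[unfolded nonsquare_beyond_def, rule_format, of "{s}" u] assms(2-4) by simp

text \<open>The norm a ^ 2 - b ^ 2 d (k+1) of a + b y (k+1) vanishes only for a = b = 0, as d (k+1)
  is not a square in L k.\<close>
lemma tower_norm_nonzero:
  assumes k: "Suc k \<le> n" and F: "field_closed (L k)" and NS: "nonsquare_beyond k"
    and ab: "a \<in> L k" "b \<in> L k" "a \<noteq> 0 \<or> b \<noteq> 0"
  shows "a ^ 2 - b ^ 2 * d (Suc k) \<noteq> 0"
proof
  assume N0: "a ^ 2 - b ^ 2 * d (Suc k) = 0"
  show False
  proof (cases "b = 0")
    case False
    have "(a / b) ^ 2 = d (Suc k)" using N0 False by (simp add: field_simps)
    thus False using nonsquare_beyond_single[OF NS _ _ fc_divide[OF F ab(1,2)]] k by simp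
  qed (use N0 ab in simp)
qed

text \<open>If d (k+1) is not a square in the field L k, then L (k+1) = L k(y (k+1)) is again a field:
  the inverse of a + b y is (a - b y) / (a^2 - b^2 d).\<close>
lemma tower_Suc_field_closed:
  assumes k: "Suc k \<le> n" and F: "field_closed (L k)" and NS: "nonsquare_beyond k"
  shows "field_closed (L (Suc k))"
proof -
  define s where "s = Suc k"
  have sn: "s \<in> {1..n}" using k by (simp add: s_def)
  have dL: "d s \<in> L k" using K_sub_tower d_in_K[OF sn] by auto
  have ydd: "y s * y s = d s" using y_sq[OF sn] by (simp add: power2_eq_square)
  have memL: "u \<in> L s \<longleftrightarrow> (\<exists>a b. a \<in> L k \<and> b \<in> L k \<and> u = a + b * y s)" for u
    by (auto simp: s_def)
  have closed: "u + v \<in> L s \<and> u * v \<in> L s" if uv: "u \<in> L s" "v \<in> L s" for u v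
  proof -
    obtain a b a' b' where ab: "a \<in> L k" "b \<in> L k" "u = a + b * y s"
      and ab': "a' \<in> L k" "b' \<in> L k" "v = a' + b' * y s" using uv unfolding memL by blast
    have "u + v = (a + a') + (b + b') * y s" "u * v = (a * a' + b * b' * d s) + (a * b' + b * a') * y s"
      unfolding ab ab' by (simp_all add: algebra_simps ydd[symmetric])
    thus ?thesis unfolding memL using ab ab' dL by (metis fc_add[OF F] fc_mult[OF F])
  qed
  have inverse: "inverse u \<in> L s" if u: "u \<in> L s" for u
  proof (cases "u = 0")
    case False
    obtain a b where ab: "a \<in> L k" "b \<in> L k" "u = a + b * y s" using u unfolding memL by blast
    define N where "N = a ^ 2 - b ^ 2 * d s"
    have Nnz: "N \<noteq> 0"
      unfolding N_def s_def using False ab by (intro tower_norm_nonzero[OF k F NS]) auto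
    have "u * (a / N + (- b / N) * y s) = (a ^ 2 - b ^ 2 * (y s * y s)) / N"
      unfolding ab using Nnz by (simp add: field_simps power2_eq_square)
    also have "\<dots> = 1" using Nnz by (simp add: ydd N_def)
    finally have "inverse u = a / N + (- b / N) * y s" by (rule inverse_unique)
    moreover have "N \<in> L k" unfolding N_def using ab dL
      by (intro fc_diff[OF F] fc_mult[OF F] fc_power[OF F])
    ultimately show ?thesis unfolding memL using ab
      by (intro exI[of _ "a / N"] exI[of _ "- b / N"]) (auto intro: fc_divide[OF F] fc_neg[OF F])
  qed (simp add: zero_in_tower)
  have one: "1 \<in> L s"
    using zero_in_tower fc_1[OF F] unfolding memL by (intro exI[of _ 1] exI[of _ 0]) auto
  have neg: "- u \<in> L s" if u: "u \<in> L s" for u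
  proof -
    obtain a b where "a \<in> L k" "b \<in> L k" "u = a + b * y s" using u unfolding memL by blast
    thus ?thesis unfolding memL by (intro exI[of _ "- a"] exI[of _ "- b"]) (auto simp: fc_neg[OF F])
  qed
  show ?thesis unfolding field_closed_def s_def[symmetric]
    using zero_in_tower one neg closed inverse by blast
qed

text \<open>Propagation of the invariant: write u = a + b y (k+1) with a, b in L k and compare
  u ^ 2 = D.  If a b \<noteq> 0 then y (k+1) would lie in L k; if b = 0 or a = 0 we obtain a square
  root in L k of D, resp. of D / d (k+1) or D d (k+1), each still involving an index beyond
  k + 1.\<close>
lemma tower_Suc_nonsquare:
  assumes k: "Suc k \<le> n" and F: "field_closed (L k)" and NS: "nonsquare_beyond k"
  shows "nonsquare_beyond (Suc k)"
  unfolding nonsquare_beyond_def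
proof (intro allI impI notI)
  fix T u assume T: "T \<subseteq> {1..n}" and jT: "\<exists>j\<in>T. Suc k < j" and u: "u \<in> L (Suc k)"
    and eq: "u ^ 2 = (\<Prod>i\<in>T. d i)"
  define s where "s = Suc k"
  have sn: "s \<in> {1..n}" using k by (simp add: s_def)
  have dL: "d s \<in> L k" using K_sub_tower d_in_K[OF sn] by auto
  have ydd: "y s * y s = d s" using y_sq[OF sn] by (simp add: power2_eq_square)
  have dnz: "d s \<noteq> 0" using prod_d_not_square[of "{s}" 0] sn fc_0[OF K_field] by auto
  obtain j where j: "j \<in> T" "s < j" using jT by (auto simp: s_def)
  obtain a b where ab: "a \<in> L k" "b \<in> L k" "u = a + b * y s" using u by (auto simp: s_def)
  have DL: "(\<Prod>i\<in>T. d i) \<in> L k" using prod_d_in_K[OF T] K_sub_tower by auto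
  have finT: "finite T" using T finite_subset by blast
  have NS_k: "v ^ 2 \<noteq> (\<Prod>i\<in>T'. d i)" if "T' \<subseteq> {1..n}" "j \<in> T'" "v \<in> L k" for T' v
  proof -
    have "\<exists>i\<in>T'. k < i" using that(2) j(2) unfolding s_def by (intro bexI[of _ j]) auto
    thus ?thesis using NS[unfolded nonsquare_beyond_def, rule_format, of T' v] that(1,3) by blast
  qed
  have sq: "u ^ 2 = (a ^ 2 + b ^ 2 * d s) + (2 * a * b) * y s"
    unfolding ab by (simp add: algebra_simps power2_eq_square ydd[symmetric])
  consider "a * b \<noteq> 0" | "b = 0" | "a = 0" "b \<noteq> 0" by auto
  thus False
  proof cases
    case 1
    have "y s = ((\<Prod>i\<in>T. d i) - a ^ 2 - b ^ 2 * d s) / (2 * a * b)"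
      using 1 eq sq by (simp add: field_simps)
    moreover have "((\<Prod>i\<in>T. d i) - a ^ 2 - b ^ 2 * d s) / (2 * a * b) \<in> L k"
      using ab DL dL fc_1[OF F] fc_add[OF F fc_1[OF F] fc_1[OF F]]
      by (intro fc_divide[OF F] fc_diff[OF F] fc_mult[OF F] fc_power[OF F]) auto
    ultimately have "y s \<in> L k" by simp
    thus False using nonsquare_beyond_single[OF NS sn] y_sq[OF sn] by (simp add: s_def)
  next
    case 2
    thus False using NS_k[OF T j(1) ab(1)] eq ab(3) by simp
  next
    case 3
    hence bd: "b ^ 2 * d s = (\<Prod>i\<in>T. d i)" using eq ab(3) by (simp add: ydd[symmetric] power2_eq_square mult_ac)
    show False
    proof (cases "s \<in> T")
      case True
      have "(\<Prod>i\<in>T. d i) = d s * (\<Prod>i\<in>T - {s}. d i)" using finT True by (simp add: prod.remove)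
      hence "b ^ 2 = (\<Prod>i\<in>T - {s}. d i)" using bd dnz by simp
      thus False using NS_k[of "T - {s}" b] T ab(2) j by auto
    next
      case False
      have "(\<Prod>i\<in>insert s T. d i) = d s * (\<Prod>i\<in>T. d i)" using finT False by simp
      hence "(b * d s) ^ 2 = (\<Prod>i\<in>insert s T. d i)" using bd by (simp add: power2_eq_square algebra_simps)
      thus False using NS_k[of "insert s T" "b * d s"] T sn j ab(2) dL fc_mult[OF F] by auto
    qed
  qed
qed

lemma tower_field_closed_nonsquare: "k \<le> n \<Longrightarrow> field_closed (L k) \<and> nonsquare_beyond k"
proof (induction k)
  case 0
  show ?case using K_field prod_d_not_square unfolding nonsquare_beyond_def by auto
next
  case (Suc k)
  thus ?case using tower_Suc_field_closed tower_Suc_nonsquare by simp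
qed

lemma tower_field_closed: "k \<le> n \<Longrightarrow> field_closed (L k)"
  using tower_field_closed_nonsquare by blast

lemma y_Suc_notin_tower:
  assumes k: "Suc k \<le> n"
  shows "y (Suc k) \<notin> L k"
proof
  assume "y (Suc k) \<in> L k"
  moreover have "Suc k \<in> {1..n}" using k by simp
  moreover have "nonsquare_beyond k" using tower_field_closed_nonsquare[of k] k by simp
  ultimately show False using nonsquare_beyond_single y_sq by blast
qed

lemma tower_coords_unique:
  assumes k: "Suc k \<le> n" and "a \<in> L k" "b \<in> L k" "a' \<in> L k" "b' \<in> L k"
    and eq: "a + b * y (Suc k) = a' + b' * y (Suc k)"
  shows "a = a' \<and> b = b'"
proof (cases "b = b'")
  case False
  have F: "field_closed (L k)" using tower_field_closed k by simp
  have "y (Suc k) = (a' - a) / (b - b')" using eq False by (simp add: field_simps)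
  moreover have "(a' - a) / (b - b') \<in> L k" using assms by (intro fc_divide[OF F] fc_diff[OF F])
  ultimately show ?thesis using y_Suc_notin_tower[OF k] by simp
qed (use eq in simp)

lemma y_in_tower: "j \<in> {1..k} \<Longrightarrow> y j \<in> L k"
proof -
  assume j: "j \<in> {1..k}"
  then obtain i where i: "j = Suc i" by (cases j) auto
  have mem: "y (Suc i) \<in> L (Suc i)" unfolding tower_Suc_iff
    using zero_in_tower K_sub_tower fc_1[OF K_field] by (intro exI[of _ 0] exI[of _ 1]) auto
  have sub: "L (Suc i) \<subseteq> L k" by (rule tower_mono) (use j i in simp)
  show ?thesis unfolding i by (rule subsetD[OF sub mem])
qed

lemma ymon_in_tower: "k \<le> n \<Longrightarrow> S \<subseteq> {1..k} \<Longrightarrow> ymon y S \<in> L k"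
  unfolding ymon_def using y_in_tower finite_subset[of S "{1..k}"]
  by (intro fc_prod[OF tower_field_closed]) auto

lemma tower_basis_spans:
  "k \<le> n \<Longrightarrow> u \<in> L k \<Longrightarrow> \<exists>c. (\<forall>S. c S \<in> K) \<and> u = (\<Sum>S\<in>Pow {1..k}. c S * ymon y S)"
proof (induction k arbitrary: u)
  case 0
  thus ?case by (intro exI[of _ "\<lambda>_. u"]) (auto simp: ymon_def)
next
  case (Suc k)
  obtain a b where ab: "a \<in> L k" "b \<in> L k" "u = a + b * y (Suc k)" using Suc.prems by auto
  obtain ca where ca: "\<forall>S. ca S \<in> K" "a = (\<Sum>S\<in>Pow {1..k}. ca S * ymon y S)" using Suc ab by auto
  obtain cb where cb: "\<forall>S. cb S \<in> K" "b = (\<Sum>S\<in>Pow {1..k}. cb S * ymon y S)" using Suc ab by auto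
  define c where "c S = (if Suc k \<in> S then cb (S - {Suc k}) else ca S)" for S
  have "(\<Sum>S\<in>Pow {1..k}. c S * ymon y S) = a"
    unfolding ca(2) c_def by (rule sum.cong) auto
  moreover have "(\<Sum>S\<in>Pow {1..k}. c (insert (Suc k) S) * ymon y (insert (Suc k) S)) = b * y (Suc k)"
    unfolding cb(2) sum_distrib_right
  proof (rule sum.cong[OF refl])
    fix S assume S: "S \<in> Pow {1..k}"
    hence "insert (Suc k) S - {Suc k} = S" by auto
    hence "c (insert (Suc k) S) = cb S" by (simp add: c_def)
    thus "c (insert (Suc k) S) * ymon y (insert (Suc k) S) = cb S * ymon y S * y (Suc k)"
      using ymon_insert[of S k y] S by simp
  qed
  ultimately have "(\<Sum>S\<in>Pow {1..Suc k}. c S * ymon y S) = u"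
    unfolding sum_Pow_Suc ab(3) by simp
  thus ?case using ca cb by (intro exI[of _ c]) (auto simp: c_def)
qed

lemma tower_basis_independent:
  "k \<le> n \<Longrightarrow> (\<forall>S. c S \<in> K) \<Longrightarrow> (\<Sum>S\<in>Pow {1..k}. c S * ymon y S) = 0 \<Longrightarrow> S \<subseteq> {1..k} \<Longrightarrow> c S = 0"
proof (induction k arbitrary: c S)
  case 0
  thus ?case by (simp add: ymon_def)
next
  case (Suc k)
  define A where "A = (\<Sum>S\<in>Pow {1..k}. c S * ymon y S)"
  define B where "B = (\<Sum>S\<in>Pow {1..k}. c (insert (Suc k) S) * ymon y S)"
  have "(\<Sum>S\<in>Pow {1..k}. c (insert (Suc k) S) * ymon y (insert (Suc k) S)) = B * y (Suc k)"
    unfolding B_def sum_distrib_right by (rule sum.cong) (simp_all add: ymon_insert mult_ac)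
  hence "A + B * y (Suc k) = 0 + 0 * y (Suc k)"
    using Suc.prems(3) unfolding sum_Pow_Suc A_def by simp
  moreover have AB_L: "A \<in> L k" "B \<in> L k" unfolding A_def B_def using Suc.prems K_sub_tower
    by (auto intro!: fc_sum[OF tower_field_closed] fc_mult[OF tower_field_closed] ymon_in_tower)
  ultimately have AB: "A = 0" "B = 0"
    using tower_coords_unique[OF Suc.prems(1) AB_L zero_in_tower zero_in_tower] by auto
  show ?case
  proof (cases "Suc k \<in> S")
    case True
    have "S - {Suc k} \<subseteq> {1..k}" using Suc.prems(4) by auto
    hence "c (insert (Suc k) (S - {Suc k})) = 0"
      using Suc.IH[of "\<lambda>S. c (insert (Suc k) S)" "S - {Suc k}"] Suc.prems AB(2) unfolding B_def by auto
    thus ?thesis using True by (simp add: insert_absorb)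
  next
    case False
    hence "S \<subseteq> {1..k}" using Suc.prems(4) by (auto simp: le_Suc_eq)
    thus ?thesis using Suc.IH[of c S] Suc.prems AB(1) unfolding A_def by auto
  qed
qed

end

text \<open>A choice of signs; it determines the automorphism y j \<mapsto> e j * y j of the tower.\<close>
definition signs :: "(nat \<Rightarrow> 'a::field) \<Rightarrow> bool" where
  "signs e \<longleftrightarrow> (\<forall>j. e j = 1 \<or> e j = -1)"

context quadratic_tower
begin

text \<open>The K-automorphism of L k sending y j to e j * y j, defined level by level through the
  unique coordinates: a + b y (k+1) \<mapsto> sigma a + e (k+1) sigma b y (k+1).\<close>
primrec sign_map :: "(nat \<Rightarrow> 'a) \<Rightarrow> nat \<Rightarrow> 'a \<Rightarrow> 'a" where
  "sign_map e 0 u = u"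
| "sign_map e (Suc k) u = (THE v. \<exists>a b. a \<in> L k \<and> b \<in> L k \<and> u = a + b * y (Suc k) \<and>
      v = sign_map e k a + e (Suc k) * sign_map e k b * y (Suc k))"

lemma sign_map_Suc:
  assumes k: "Suc k \<le> n" and a: "a \<in> L k" and b: "b \<in> L k"
  shows "sign_map e (Suc k) (a + b * y (Suc k)) = sign_map e k a + e (Suc k) * sign_map e k b * y (Suc k)"
  unfolding sign_map.simps
proof (rule the_equality)
  fix v assume "\<exists>a' b'. a' \<in> L k \<and> b' \<in> L k \<and> a + b * y (Suc k) = a' + b' * y (Suc k) \<and>
      v = sign_map e k a' + e (Suc k) * sign_map e k b' * y (Suc k)"
  then obtain a' b' where ab': "a' \<in> L k" "b' \<in> L k" "a + b * y (Suc k) = a' + b' * y (Suc k)"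
    "v = sign_map e k a' + e (Suc k) * sign_map e k b' * y (Suc k)" by blast
  with tower_coords_unique[OF k a b ab'(1-3)] show "v = sign_map e k a + e (Suc k) * sign_map e k b * y (Suc k)"
    by simp
qed (use a b in blast)

definition sign_hom :: "(nat \<Rightarrow> 'a) \<Rightarrow> nat \<Rightarrow> bool" where
  "sign_hom e k \<longleftrightarrow> (\<forall>u\<in>L k. sign_map e k u \<in> L k) \<and> (\<forall>c\<in>K. sign_map e k c = c) \<and>
     (\<forall>u\<in>L k. \<forall>v\<in>L k. sign_map e k (u + v) = sign_map e k u + sign_map e k v \<and>
                        sign_map e k (u * v) = sign_map e k u * sign_map e k v)"

text \<open>Additivity and multiplicativity of sign_map e (k+1), computed in coordinates
  a + b y (k+1); the product uses y (k+1) ^ 2 = d (k+1) in K and e (k+1) ^ 2 = 1.\<close>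
lemma sign_map_Suc_add:
  assumes k: "Suc k \<le> n" and IH: "sign_hom e k"
    and ab: "a \<in> L k" "b \<in> L k" and ab': "a' \<in> L k" "b' \<in> L k"
  shows "sign_map e (Suc k) ((a + b * y (Suc k)) + (a' + b' * y (Suc k))) =
         sign_map e (Suc k) (a + b * y (Suc k)) + sign_map e (Suc k) (a' + b' * y (Suc k))"
proof -
  have F: "field_closed (L k)" using tower_field_closed k by simp
  have hom: "sign_map e k (a + a') = sign_map e k a + sign_map e k a'"
    "sign_map e k (b + b') = sign_map e k b + sign_map e k b'"
    using IH ab ab' unfolding sign_hom_def by auto
  have "(a + b * y (Suc k)) + (a' + b' * y (Suc k)) = (a + a') + (b + b') * y (Suc k)"
    by (simp add: algebra_simps)
  hence "sign_map e (Suc k) ((a + b * y (Suc k)) + (a' + b' * y (Suc k))) =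
         sign_map e (Suc k) ((a + a') + (b + b') * y (Suc k))" by (rule arg_cong)
  also have "\<dots> = sign_map e k (a + a') + e (Suc k) * sign_map e k (b + b') * y (Suc k)"
    using ab ab' by (intro sign_map_Suc[OF k] fc_add[OF F])
  also have "\<dots> = sign_map e (Suc k) (a + b * y (Suc k)) + sign_map e (Suc k) (a' + b' * y (Suc k))"
    unfolding sign_map_Suc[OF k ab] sign_map_Suc[OF k ab'] hom by (simp add: algebra_simps)
  finally show ?thesis .
qed

lemma sign_map_Suc_mult:
  assumes k: "Suc k \<le> n" and e: "signs e" and IH: "sign_hom e k"
    and ab: "a \<in> L k" "b \<in> L k" and ab': "a' \<in> L k" "b' \<in> L k"
  shows "sign_map e (Suc k) ((a + b * y (Suc k)) * (a' + b' * y (Suc k))) =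
         sign_map e (Suc k) (a + b * y (Suc k)) * sign_map e (Suc k) (a' + b' * y (Suc k))"
proof -
  define s where "s = Suc k"
  define \<sigma> where "\<sigma> = sign_map e k"
  have sn: "s \<in> {1..n}" using k by (simp add: s_def)
  have F: "field_closed (L k)" using tower_field_closed k by simp
  have hom: "\<sigma> (u + v) = \<sigma> u + \<sigma> v" "\<sigma> (u * v) = \<sigma> u * \<sigma> v" if "u \<in> L k" "v \<in> L k" for u v
    using IH that unfolding sign_hom_def \<sigma>_def by auto
  have ps: "sign_map e s (u + v * y s) = \<sigma> u + e s * \<sigma> v * y s" if "u \<in> L k" "v \<in> L k" for u v
    unfolding s_def \<sigma>_def by (rule sign_map_Suc[OF k that])
  have es: "e s * e s = 1" using e unfolding signs_def by (cases "e s = 1") auto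
  have dK: "d s \<in> K" using d_in_K[OF sn] .
  have dL: "d s \<in> L k" using dK K_sub_tower by auto
  have \<sigma>d: "\<sigma> (d s) = d s" using IH dK unfolding sign_hom_def \<sigma>_def by auto
  have ydd: "y s * y s = d s" using y_sq[OF sn] by (simp add: power2_eq_square)
  have "(a + b * y s) * (a' + b' * y s) = (a * a' + b * b' * d s) + (a * b' + b * a') * y s"
    by (simp add: algebra_simps ydd[symmetric])
  hence "sign_map e s ((a + b * y s) * (a' + b' * y s)) =
         \<sigma> (a * a' + b * b' * d s) + e s * \<sigma> (a * b' + b * a') * y s"
    using ab ab' dL by (simp add: ps fc_add[OF F] fc_mult[OF F])
  also have "\<dots> = \<sigma> a * \<sigma> a' + \<sigma> b * \<sigma> b' * d s + e s * (\<sigma> a * \<sigma> b' + \<sigma> b * \<sigma> a') * y s"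
    using ab ab' dL fc_mult[OF F] by (simp add: hom \<sigma>d)
  also have "\<dots> = \<sigma> a * \<sigma> a' + (e s * e s) * (\<sigma> b * \<sigma> b') * (y s * y s) +
                  e s * (\<sigma> a * \<sigma> b' + \<sigma> b * \<sigma> a') * y s"
    unfolding es ydd by (simp add: mult_ac)
  also have "\<dots> = sign_map e s (a + b * y s) * sign_map e s (a' + b' * y s)"
    unfolding ps[OF ab] ps[OF ab'] by (simp add: algebra_simps)
  finally show ?thesis unfolding s_def .
qed

lemma sign_hom_Suc:
  assumes k: "Suc k \<le> n" and e: "signs e" and IH: "sign_hom e k"
  shows "sign_hom e (Suc k)"
proof -
  have F: "field_closed (L k)" using tower_field_closed k by simp
  have ps: "sign_map e (Suc k) (a + b * y (Suc k)) = sign_map e k a + e (Suc k) * sign_map e k b * y (Suc k)"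
    if "a \<in> L k" "b \<in> L k" for a b by (rule sign_map_Suc[OF k that])
  have "sign_map e (Suc k) u \<in> L (Suc k)" if u: "u \<in> L (Suc k)" for u
  proof -
    obtain a b where ab: "a \<in> L k" "b \<in> L k" "u = a + b * y (Suc k)" using u tower_Suc_iff by blast
    have "e (Suc k) \<in> L k" using e fc_1[OF F] fc_neg[OF F, of 1] unfolding signs_def by (cases "e (Suc k) = 1") auto
    hence "sign_map e k a \<in> L k" "e (Suc k) * sign_map e k b \<in> L k"
      using IH ab fc_mult[OF F] unfolding sign_hom_def by auto
    thus ?thesis unfolding ab(3) ps[OF ab(1,2)] tower_Suc_iff by blast
  qed
  moreover have "sign_map e (Suc k) c = c" if c: "c \<in> K" for c
  proof -
    have "sign_map e (Suc k) (c + 0 * y (Suc k)) = sign_map e k c + e (Suc k) * sign_map e k 0 * y (Suc k)"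
      using c K_sub_tower by (intro ps zero_in_tower) auto
    thus ?thesis using IH c fc_0[OF K_field] unfolding sign_hom_def by simp
  qed
  moreover have "sign_map e (Suc k) (u + v) = sign_map e (Suc k) u + sign_map e (Suc k) v \<and>
                 sign_map e (Suc k) (u * v) = sign_map e (Suc k) u * sign_map e (Suc k) v"
    if "u \<in> L (Suc k)" "v \<in> L (Suc k)" for u v
    using that sign_map_Suc_add[OF k IH] sign_map_Suc_mult[OF k e IH] unfolding tower_Suc_iff by auto
  ultimately show ?thesis unfolding sign_hom_def by blast
qed

lemma sign_map_hom:
  assumes e: "signs e" shows "k \<le> n \<Longrightarrow> sign_hom e k"
proof (induction k)
  case (Suc k)
  show ?case by (rule sign_hom_Suc[OF Suc.prems e Suc.IH[OF Suc_leD[OF Suc.prems]]])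
qed (simp add: sign_hom_def)

context
  fixes e :: "nat \<Rightarrow> 'a" assumes e: "signs e"
begin

lemma sign_map_K: "k \<le> n \<Longrightarrow> c \<in> K \<Longrightarrow> sign_map e k c = c"
  using sign_map_hom[OF e] unfolding sign_hom_def by blast
lemma sign_map_add: "k \<le> n \<Longrightarrow> u \<in> L k \<Longrightarrow> v \<in> L k \<Longrightarrow> sign_map e k (u + v) = sign_map e k u + sign_map e k v"
  using sign_map_hom[OF e] unfolding sign_hom_def by blast
lemma sign_map_mult: "k \<le> n \<Longrightarrow> u \<in> L k \<Longrightarrow> v \<in> L k \<Longrightarrow> sign_map e k (u * v) = sign_map e k u * sign_map e k v"
  using sign_map_hom[OF e] unfolding sign_hom_def by blast
lemma sign_map_0: "k \<le> n \<Longrightarrow> sign_map e k 0 = 0"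
  using sign_map_K fc_0[OF K_field] by blast
lemma sign_map_1: "k \<le> n \<Longrightarrow> sign_map e k 1 = 1"
  using sign_map_K fc_1[OF K_field] by blast

lemma sign_map_neg: assumes k: "k \<le> n" and u: "u \<in> L k" shows "sign_map e k (- u) = - sign_map e k u"
proof -
  have "sign_map e k (u + - u) = sign_map e k u + sign_map e k (- u)"
    using sign_map_add[OF k u fc_neg[OF tower_field_closed[OF k] u]] .
  thus ?thesis using sign_map_0[OF k] by (simp add: add_eq_0_iff)
qed

lemma sign_map_sum:
  assumes k: "k \<le> n"
  shows "finite S \<Longrightarrow> (\<And>i. i \<in> S \<Longrightarrow> f i \<in> L k) \<Longrightarrow> sign_map e k (sum f S) = (\<Sum>i\<in>S. sign_map e k (f i))"
proof (induction S rule: finite_induct)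
  case (insert i S)
  have "sum f S \<in> L k" using insert by (intro fc_sum[OF tower_field_closed[OF k]]) auto
  thus ?case using insert sign_map_add[OF k] by simp
qed (simp add: sign_map_0[OF k])

lemma sign_map_prod:
  assumes k: "k \<le> n"
  shows "finite S \<Longrightarrow> (\<And>i. i \<in> S \<Longrightarrow> f i \<in> L k) \<Longrightarrow> sign_map e k (prod f S) = (\<Prod>i\<in>S. sign_map e k (f i))"
proof (induction S rule: finite_induct)
  case (insert i S)
  have "prod f S \<in> L k" using insert by (intro fc_prod[OF tower_field_closed[OF k]]) auto
  thus ?case using insert sign_map_mult[OF k] by simp
qed (simp add: sign_map_1[OF k])

lemma sign_map_power:
  assumes k: "k \<le> n" and u: "u \<in> L k"
  shows "sign_map e k (u ^ i) = sign_map e k u ^ i"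
proof (induction i)
  case (Suc i)
  have "sign_map e k (u * u ^ i) = sign_map e k u * sign_map e k (u ^ i)"
    by (rule sign_map_mult[OF k u fc_power[OF tower_field_closed[OF k] u]])
  thus ?case using Suc by simp
qed (simp add: sign_map_1[OF k])

lemma sign_map_lower: assumes k: "Suc k \<le> n" and u: "u \<in> L k" shows "sign_map e (Suc k) u = sign_map e k u"
  using sign_map_Suc[OF k u zero_in_tower, of e] sign_map_0[of k] k by simp

lemma sign_map_y: assumes j: "j \<in> {1..k}" and k: "k \<le> n" shows "sign_map e k (y j) = e j * y j"
proof -
  have "j \<le> k" using j by simp
  thus ?thesis using k
  proof (induction k rule: dec_induct)
    case base
    obtain i where i: "j = Suc i" using j by (cases j) auto
    have "sign_map e (Suc i) (0 + 1 * y (Suc i)) = sign_map e i 0 + e (Suc i) * sign_map e i 1 * y (Suc i)"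
      using sign_map_Suc[of i 0 1] base zero_in_tower K_sub_tower fc_1[OF K_field] i by auto
    thus ?case using sign_map_0[of i] sign_map_1[of i] base i by simp
  next
    case (step m)
    have "y j \<in> L m" using y_in_tower j step by simp
    thus ?case using sign_map_lower[of m] step by simp
  qed
qed

lemma sign_map_ymon:
  assumes k: "k \<le> n" and S: "S \<subseteq> {1..k}"
  shows "sign_map e k (ymon y S) = (\<Prod>j\<in>S. e j) * ymon y S"
proof -
  have fS: "finite S" using S finite_subset by blast
  have "sign_map e k (ymon y S) = (\<Prod>j\<in>S. sign_map e k (y j))"
    unfolding ymon_def using S y_in_tower by (intro sign_map_prod[OF k fS]) auto
  also have "\<dots> = (\<Prod>j\<in>S. e j * y j)"
    using S by (intro prod.cong[OF refl] sign_map_y[OF _ k]) auto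
  finally show ?thesis unfolding ymon_def by (simp add: prod.distrib)
qed

lemma sign_map_coords:
  assumes k: "k \<le> n" and c: "\<And>S. c S \<in> K"
  shows "sign_map e k (\<Sum>S\<in>Pow {1..k}. c S * ymon y S) = (\<Sum>S\<in>Pow {1..k}. c S * (\<Prod>j\<in>S. e j) * ymon y S)"
proof -
  have mem: "c S \<in> L k" "ymon y S \<in> L k" if "S \<in> Pow {1..k}" for S
    using c K_sub_tower ymon_in_tower[OF k] that by auto
  have "sign_map e k (\<Sum>S\<in>Pow {1..k}. c S * ymon y S) = (\<Sum>S\<in>Pow {1..k}. sign_map e k (c S * ymon y S))"
    using mem by (intro sign_map_sum[OF k]) (auto intro: fc_mult[OF tower_field_closed[OF k]])
  also have "\<dots> = (\<Sum>S\<in>Pow {1..k}. c S * (\<Prod>j\<in>S. e j) * ymon y S)"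
  proof (intro sum.cong[OF refl])
    fix S assume "S \<in> Pow {1..k}"
    thus "sign_map e k (c S * ymon y S) = c S * (\<Prod>j\<in>S. e j) * ymon y S"
      using mem sign_map_mult[OF k] sign_map_K[OF k c] sign_map_ymon[OF k] by (simp add: mult.assoc)
  qed
  finally show ?thesis .
qed

end

lemma sign_flip_fixed_even:
  assumes m: "m \<le> n" and u: "u \<in> L m" and fixed: "sign_map (\<lambda>_. -1) m u = u"
  shows "\<exists>c. (\<forall>S. c S \<in> K) \<and> u = (\<Sum>S\<in>{S \<in> Pow {1..m}. even (card S)}. c S * ymon y S)"
proof -
  have e: "signs (\<lambda>_. -1::'a)" by (simp add: signs_def)
  obtain c where c: "\<And>S. c S \<in> K" "u = (\<Sum>S\<in>Pow {1..m}. c S * ymon y S)"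
    using tower_basis_spans[OF m u] by blast
  have "(\<Sum>S\<in>Pow {1..m}. (c S - c S * (-1) ^ card S) * ymon y S) = u - sign_map (\<lambda>_. -1) m u"
    unfolding c(2) sign_map_coords[OF e m c(1)] by (simp add: algebra_simps sum_subtractf)
  hence zero: "(\<Sum>S\<in>Pow {1..m}. (c S - c S * (-1) ^ card S) * ymon y S) = 0"
    using fixed by simp
  have inK: "\<forall>S. c S - c S * (-1) ^ card S \<in> K"
    using c(1) K_field by (intro allI fc_diff fc_mult fc_power fc_neg fc_1) auto
  have z: "c S - c S * (-1) ^ card S = 0" if "S \<subseteq> {1..m}" for S
    by (rule tower_basis_independent[OF m inK zero that])
  have "c S = 0" if "S \<subseteq> {1..m}" "odd (card S)" for S
  proof -
    have "(-1::'a) ^ card S = -1" using that(2) by simp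
    thus ?thesis using z[OF that(1)] by simp
  qed
  hence "u = (\<Sum>S\<in>Pow {1..m}. if even (card S) then c S * ymon y S else 0)"
    unfolding c(2) by (intro sum.cong) auto
  also have "\<dots> = (\<Sum>S\<in>{S \<in> Pow {1..m}. even (card S)}. c S * ymon y S)"
    by (rule sum.inter_filter[symmetric]) simp
  finally show ?thesis using c(1) by blast
qed

end

definition EC_coeff :: "nat \<Rightarrow> (nat \<Rightarrow> 'a::comm_ring_1) \<Rightarrow> (nat \<Rightarrow> 'a) \<Rightarrow> nat set \<Rightarrow> 'a" where
  "EC_coeff m x e S = (if even (card S) then (-1) ^ (card S div 2) * (\<Prod>j\<in>S. e j) * (\<Prod>j\<in>{1..m} - S. x j) else 0)"

lemma EC_as_ymon_sum:
  "EC m x (\<lambda>j. e j * y j) = (\<Sum>S\<in>Pow {1..m}. EC_coeff m x e S * ymon y S)"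
proof -
  have "{S. S \<subseteq> {1..m} \<and> even (card S)} = {S \<in> Pow {1..m}. even (card S)}" by auto
  hence "EC m x (\<lambda>j. e j * y j) = (\<Sum>S\<in>{S \<in> Pow {1..m}. even (card S)}.
      (-1) ^ (card S div 2) * (\<Prod>j\<in>S. e j * y j) * (\<Prod>j\<in>{1..m} - S. x j))"
    unfolding EC_def by simp
  also have "\<dots> = (\<Sum>S\<in>Pow {1..m}. if even (card S) then
      (-1) ^ (card S div 2) * (\<Prod>j\<in>S. e j * y j) * (\<Prod>j\<in>{1..m} - S. x j) else 0)"
    by (rule sum.inter_filter) simp
  also have "\<dots> = (\<Sum>S\<in>Pow {1..m}. EC_coeff m x e S * ymon y S)"
    by (rule sum.cong) (auto simp: EC_coeff_def ymon_def prod.distrib)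
  finally show ?thesis .
qed

text \<open>EC only involves monomials of even degree, so it is invariant under y \<mapsto> - y.\<close>
lemma EC_flip_invariant: "EC m x (\<lambda>j. -1 * y j) = EC m x y"
  unfolding EC_def
proof (rule sum.cong[OF refl])
  fix S assume S: "S \<in> {S. S \<subseteq> {1..m} \<and> even (card S)}"
  have "(\<Prod>j\<in>S. -1 * y j) = (\<Prod>j\<in>S. -1) * (\<Prod>j\<in>S. y j)" by (rule prod.distrib)
  also have "(\<Prod>j\<in>S. -1::'a) = 1" using S by (simp add: neg_one_even_power)
  finally have "(\<Prod>j\<in>S. -1 * y j) = (\<Prod>j\<in>S. y j)" by simp
  thus "(-1) ^ (card S div 2) * (\<Prod>j\<in>S. -1 * y j) * (\<Prod>j\<in>{1..m} - S. x j) =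
        (-1) ^ (card S div 2) * (\<Prod>j\<in>S. y j) * (\<Prod>j\<in>{1..m} - S. x j)" by simp
qed

definition flip_signs :: "nat set \<Rightarrow> nat \<Rightarrow> 'a::comm_ring_1" where
  "flip_signs T j = (if j \<in> T then -1 else 1)"

lemma signs_flip_signs: "signs (flip_signs T :: nat \<Rightarrow> 'a::field)"
  by (simp add: signs_def flip_signs_def)

locale EC_tower = quadratic_tower K d y n for K :: "'a::field_char_0 set" and d y n +
  fixes x :: "nat \<Rightarrow> 'a"
  assumes x_in_K: "j \<in> {1..n} \<Longrightarrow> x j \<in> K"
    and x_nonzero: "j \<in> {1..n} \<Longrightarrow> x j \<noteq> 0"
begin

lemma EC_coeff_in_K: "m \<le> n \<Longrightarrow> signs e \<Longrightarrow> EC_coeff m x e S \<in> K"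
proof -
  assume m: "m \<le> n" and e: "signs e"
  have "e j \<in> K" for j using e fc_1[OF K_field] fc_neg[OF K_field fc_1[OF K_field]]
    unfolding signs_def by (cases "e j = 1") auto
  hence "(\<Prod>j\<in>S. e j) \<in> K" by (cases "finite S") (auto intro!: fc_prod[OF K_field] fc_1[OF K_field])
  moreover have "(\<Prod>j\<in>{1..m} - S. x j) \<in> K" using m by (intro fc_prod[OF K_field]) (auto intro!: x_in_K)
  ultimately show ?thesis unfolding EC_coeff_def using K_field
    by (auto intro!: fc_mult fc_power fc_neg fc_1 fc_0)
qed

lemma EC_in_tower:
  assumes m: "m \<le> n" shows "EC m x y \<in> L m"
proof -
  have one: "signs (\<lambda>_. 1::'a)" by (simp add: signs_def)
  have "EC m x y = (\<Sum>S\<in>Pow {1..m}. EC_coeff m x (\<lambda>_. 1) S * ymon y S)"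
    using EC_as_ymon_sum[of m x "\<lambda>_. 1" y] by simp
  also have "\<dots> \<in> L m" using ymon_in_tower[OF m]
    by (intro fc_sum[OF tower_field_closed[OF m]] fc_mult[OF tower_field_closed[OF m]])
      (auto intro: subsetD[OF K_sub_tower EC_coeff_in_K[OF m one]])
  finally show ?thesis .
qed

lemma sign_map_EC:
  assumes e: "signs e" and m: "m \<le> n"
  shows "sign_map e m (EC m x y) = EC m x (\<lambda>j. e j * y j)"
proof -
  have one: "signs (\<lambda>_. 1::'a)" by (simp add: signs_def)
  have "sign_map e m (EC m x y) = sign_map e m (\<Sum>S\<in>Pow {1..m}. EC_coeff m x (\<lambda>_. 1) S * ymon y S)"
    using EC_as_ymon_sum[of m x "\<lambda>_. 1" y] by simp
  also have "\<dots> = (\<Sum>S\<in>Pow {1..m}. EC_coeff m x (\<lambda>_. 1) S * (\<Prod>j\<in>S. e j) * ymon y S)"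
    by (rule sign_map_coords[OF e m EC_coeff_in_K[OF m one]])
  also have "\<dots> = (\<Sum>S\<in>Pow {1..m}. EC_coeff m x e S * ymon y S)"
    by (rule sum.cong) (auto simp: EC_coeff_def)
  finally show ?thesis by (simp add: EC_as_ymon_sum)
qed

text \<open>Flipping different sets of signs among y 2, ..., y m gives different conjugates: the
  coefficients of y {1, j} differ for any j where the two sign patterns differ.\<close>
lemma EC_conjugates_distinct:
  assumes m: "m \<le> n" and T: "T \<subseteq> {2..m}" and T': "T' \<subseteq> {2..m}"
    and eq: "EC m x (\<lambda>j. flip_signs T j * y j) = EC m x (\<lambda>j. flip_signs T' j * y j)"
  shows "T = T'"
proof (rule ccontr)
  assume "T \<noteq> T'"
  then obtain j where j: "(j \<in> T) \<noteq> (j \<in> T')" by blast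
  have j2: "j \<in> {2..m}" using j T T' by auto
  define D where "D S = EC_coeff m x (flip_signs T) S - EC_coeff m x (flip_signs T') S" for S
  have "(\<Sum>S\<in>Pow {1..m}. D S * ymon y S) = 0"
    using eq unfolding D_def EC_as_ymon_sum by (simp add: algebra_simps sum_subtractf)
  moreover have "\<forall>S. D S \<in> K"
    unfolding D_def using EC_coeff_in_K[OF m signs_flip_signs] fc_diff[OF K_field] by blast
  moreover have "{1, j} \<subseteq> {1..m}" using j2 by auto
  ultimately have D0: "D {1, j} = 0" using tower_basis_independent[OF m] by blast
  define P where "P = (\<Prod>i\<in>{1..m} - {1, j}. x i)"
  have "P \<noteq> 0" unfolding P_def using x_nonzero m by auto
  have "EC_coeff m x e {1, j} = - (e 1 * e j) * P" for e :: "nat \<Rightarrow> 'a"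
    using j2 by (simp add: EC_coeff_def P_def)
  moreover have "flip_signs T 1 = (1::'a)" "flip_signs T' 1 = (1::'a)"
    using T T' by (auto simp: flip_signs_def)
  ultimately have "D {1, j} = (flip_signs T' j - flip_signs T j) * P"
    unfolding D_def by (simp add: algebra_simps)
  moreover have "flip_signs T' j - flip_signs T j \<noteq> (0::'a)" using j by (auto simp: flip_signs_def)
  ultimately show False using D0 \<open>P \<noteq> 0\<close> by simp
qed

end

lemma card_even_subsets:
  assumes m: "1 \<le> m"
  shows "card {S \<in> Pow {1..m}. even (card S)} = 2 ^ (m - 1)"
proof -
  text \<open>Adjoining 1 to the odd ones is a bijection from the subsets of {2..m}.\<close>
  define f where "f T = (if even (card T) then T else insert (1::nat) T)" for T
  have fin: "finite T" if "T \<in> Pow {2..m}" for T using that finite_subset by auto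
  have inj: "inj_on f (Pow {2..m})"
  proof (rule inj_onI)
    fix T T' assume T: "T \<in> Pow {2..m}" "T' \<in> Pow {2..m}" "f T = f T'"
    have "f T - {1} = T" "f T' - {1} = T'" using T(1,2) unfolding f_def by auto
    thus "T = T'" using T(3) by metis
  qed
  have "f ` Pow {2..m} = {S \<in> Pow {1..m}. even (card S)}"
  proof (intro equalityI subsetI)
    fix S assume "S \<in> f ` Pow {2..m}"
    then obtain T where T: "T \<in> Pow {2..m}" "S = f T" by blast
    have "1 \<notin> T" using T by auto
    thus "S \<in> {S \<in> Pow {1..m}. even (card S)}" using T m fin[OF T(1)] unfolding f_def by auto
  next
    fix S assume S: "S \<in> {S \<in> Pow {1..m}. even (card S)}"
    have fS: "finite S" using S finite_subset by auto
    have T: "S - {1} \<in> Pow {2..m}" using S by auto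
    have "f (S - {1}) = S"
    proof (cases "1 \<in> S")
      case True
      hence "odd (card (S - {1}))" using S fS by (auto simp: card_gt_0_iff)
      thus ?thesis using True unfolding f_def by auto
    qed (use S in \<open>auto simp: f_def\<close>)
    thus "S \<in> f ` Pow {2..m}" using T by blast
  qed
  hence "card {S \<in> Pow {1..m}. even (card S)} = card (Pow {2..m})"
    using card_image[OF inj] by simp
  also have "\<dots> = 2 ^ (m - 1)" by (simp add: card_Pow)
  finally show ?thesis .
qed

lemma card_set_mset_le: "card (set_mset M) \<le> size M"
  by (induction M) (auto simp: card_insert_if)

text \<open>An independent list inside the span of an arbitrary list Us is no longer than Us: filter Us
  to an independent list with the same span (as in the library's filter_base, keeping track of
  the length) and apply independent_length_le.\<close>
lemma (in ring) independent_length_le_spanning: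
  assumes K: "subfield K R" and Us: "set Us \<subseteq> carrier R"
    and Vs: "independent K Vs" "set Vs \<subseteq> Span K Us"
  shows "length Vs \<le> length Us"
proof -
  have "\<exists>Ws. independent K Ws \<and> Span K Ws = Span K Us \<and> length Ws \<le> length Us"
    using Us
  proof (induction Us)
    case (Cons u Us)
    then obtain Ws where Ws: "independent K Ws" "Span K Ws = Span K Us" "length Ws \<le> length Us"
      by auto
    show ?case
    proof (cases "u \<in> Span K Us")
      case True
      hence "Span K (u # Us) = Span K Us"
        using Span_base_incl[OF K] mono_Span_subset[OF K] Cons.prems
        by (metis insert_subset list.simps(15) subset_antisym)
      thus ?thesis using Ws by (intro exI[of _ Ws]) auto
    next
      case False
      hence "Span K (u # Ws) = Span K (u # Us)" and "independent K (u # Ws)"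
        using independent.li_Cons[of u K Ws] Cons.prems Ws by auto
      thus ?thesis using Ws(3) by (intro exI[of _ "u # Ws"]) auto
    qed
  qed auto
  then obtain Ws where "independent K Ws" "Span K Ws = Span K Us" "length Ws \<le> length Us" by blast
  with independent_length_le[OF K Vs(1)] Vs(2) show ?thesis by fastforce
qed

lemma (in field) generate_field_insert:
  assumes S: "S \<subseteq> carrier R" and c: "c \<in> carrier R"
    and alg: "(algebraic over (generate_field R S)) c"
  shows "generate_field R (insert c S) = simple_extension (generate_field R S) c"
proof
  let ?K = "generate_field R S" and ?G = "generate_field R (insert c S)"
  have K: "subfield ?K R" by (rule generate_field_is_subfield[OF S])
  have G: "subfield ?G R" by (rule generate_field_is_subfield) (use S c in auto)
  have "subfield (simple_extension ?K c) R" using simple_extension_is_subfield[OF K c] alg by simp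
  moreover have "insert c S \<subseteq> simple_extension ?K c"
    using simple_extension_mem[OF subfieldE(1)[OF K] c] generate_field.incl[of _ S R]
      simple_extension_incl[OF subfieldE(3)[OF K] c] by auto
  ultimately show "?G \<subseteq> simple_extension ?K c"
    using S c by (intro generate_field_min_subfield1) auto
  have "?K \<subseteq> ?G" by (rule generate_field_min_subfield1[OF _ G]) (use S in \<open>auto intro: generate_field.incl\<close>)
  moreover have "c \<in> ?G" by (auto intro: generate_field.incl)
  ultimately show "simple_extension ?K c \<subseteq> ?G"
    using simple_extension_minimal[OF subfieldE(1)[OF K] c] subfieldE(1)[OF G] by blast
qed

sublocale quadratic_tower \<subseteq> R: field "RR :: 'a ring"
  by (rule field_from_type_algebra)

context quadratic_tower
begin

lemma K_subfield: "subfield K RR"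
  using subfield_iff_field_closed K_field by blast

lemma sum_ymon_in_Span:
  assumes "distinct Ms" and "\<And>S. c S \<in> K"
  shows "(\<Sum>S\<in>set Ms. c S * ymon y S) \<in> R.Span K (map (ymon y) Ms)"
proof -
  have "R.combine (map c Ms) (map (ymon y) Ms) = (\<Sum>S\<leftarrow>Ms. c S * ymon y S)"
    by (induction Ms) simp_all
  also have "\<dots> = (\<Sum>S\<in>set Ms. c S * ymon y S)"
    using assms(1) by (simp add: sum_list_distinct_conv_sum_set)
  moreover have "R.Span K (map (ymon y) Ms) = {R.combine Ks (map (ymon y) Ms) | Ks. set Ks \<subseteq> K}"
    by (rule R.Span_eq_combine_set[OF K_subfield]) simp
  ultimately show ?thesis using assms(2) by (auto intro!: exI[of _ "map c Ms"])
qed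

lemma tower_finite_dimension:
  assumes k: "k \<le> n" shows "R.finite_dimension K (L k)"
proof -
  obtain Ms where Ms: "distinct Ms" "set Ms = Pow {1..k}"
    using finite_distinct_list[of "Pow {1..k}"] by auto
  have "L k \<subseteq> R.Span K (map (ymon y) Ms)"
  proof
    fix u assume "u \<in> L k"
    then obtain c where "\<forall>S. c S \<in> K" "u = (\<Sum>S\<in>Pow {1..k}. c S * ymon y S)"
      using tower_basis_spans[OF k] by blast
    thus "u \<in> R.Span K (map (ymon y) Ms)" using sum_ymon_in_Span[OF Ms(1), of c] Ms(2) by simp
  qed
  moreover have "subalgebra K (L k) RR"
    using subring.axioms(1)[OF field_closed_subring[OF tower_field_closed[OF k]]]
      fc_mult[OF tower_field_closed[OF k]] K_sub_tower
    unfolding subalgebra_def subalgebra_axioms_def by auto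
  ultimately show ?thesis
    using R.subalbegra_incl_imp_finite_dimension[OF K_subfield R.Span_finite_dimension[OF K_subfield]]
    by simp
qed

lemma sign_map_eval:
  assumes e: "signs e" and k: "k \<le> n" and p: "set p \<subseteq> K" and u: "u \<in> L k"
  shows "R.eval p u \<in> L k \<and> sign_map e k (R.eval p u) = R.eval p (sign_map e k u)"
  using p
proof (induction p)
  case Nil
  thus ?case using zero_in_tower sign_map_0[OF e k] by simp
next
  case (Cons a p)
  have F: "field_closed (L k)" using tower_field_closed[OF k] .
  have aK: "a \<in> K" and IH: "R.eval p u \<in> L k" "sign_map e k (R.eval p u) = R.eval p (sign_map e k u)"
    using Cons by auto
  have aL: "a \<in> L k" using aK K_sub_tower by auto
  have powL: "u ^ length p \<in> L k" using fc_power[OF F u] .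
  have ev: "R.eval (a # p) v = a * v ^ length p + R.eval p v" for v by simp
  show ?case unfolding ev
    using fc_add[OF F fc_mult[OF F aL powL] IH(1)] sign_map_add[OF e k fc_mult[OF F aL powL] IH(1)]
      sign_map_mult[OF e k aL powL] sign_map_K[OF e k aK] sign_map_power[OF e k u] IH(2) by simp
qed

end

context EC_tower
begin

text \<open>EC m x y lies in the finite-dimensional extension L m, hence is algebraic over K.\<close>
lemma EC_algebraic: "m \<le> n \<Longrightarrow> (R.algebraic over K) (EC m x y)"
  using R.finite_dimension_imp_algebraic[OF K_subfield
      field_closed_subring[OF tower_field_closed] tower_finite_dimension EC_in_tower] by simp

text \<open>Upper bound: EC m x y lies in the subring of L m fixed by the total sign flip, which is
  spanned by the 2 ^ (m - 1) monomials of even degree.\<close>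
lemma simple_extension_EC_sub_Span:
  assumes m: "m \<le> n" and Es: "distinct Es" "set Es = {S \<in> Pow {1..m}. even (card S)}"
  shows "R.simple_extension K (EC m x y) \<subseteq> R.Span K (map (ymon y) Es)"
proof -
  have e: "signs (\<lambda>_. -1::'a)" by (simp add: signs_def)
  have F: "field_closed (L m)" using tower_field_closed[OF m] .
  define V where "V = {u \<in> L m. sign_map (\<lambda>_. -1) m u = u}"
  have "subring V RR"
    by (rule R.subringI) (auto simp: V_def fc_1[OF F] fc_neg[OF F] fc_mult[OF F] fc_add[OF F]
        sign_map_1[OF e m] sign_map_neg[OF e m] sign_map_mult[OF e m] sign_map_add[OF e m])
  moreover have "K \<subseteq> V" using K_sub_tower sign_map_K[OF e m] by (auto simp: V_def)
  moreover have "EC m x y \<in> V"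
    using EC_in_tower[OF m] sign_map_EC[OF e m] EC_flip_invariant by (simp add: V_def)
  ultimately have "R.simple_extension K (EC m x y) \<subseteq> V"
    using R.simple_extension_minimal[OF subfieldE(1)[OF K_subfield]] by auto
  also have "V \<subseteq> R.Span K (map (ymon y) Es)"
  proof
    fix u assume "u \<in> V"
    then obtain c where "\<forall>S. c S \<in> K" "u = (\<Sum>S\<in>{S \<in> Pow {1..m}. even (card S)}. c S * ymon y S)"
      using sign_flip_fixed_even[OF m] by (auto simp: V_def)
    thus "u \<in> R.Span K (map (ymon y) Es)" using sum_ymon_in_Span[OF Es(1), of c] Es(2) by simp
  qed
  finally show ?thesis .
qed

text \<open>Hence K(EC m x y), of dimension the degree of the minimal polynomial, has dimension
  at most 2 ^ (m - 1).\<close>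
lemma degree_Irr_EC_le:
  assumes m1: "1 \<le> m" and m: "m \<le> n"
  shows "Polynomials.degree (R.Irr K (EC m x y)) \<le> 2 ^ (m - 1)"
proof -
  let ?C = "EC m x y"
  obtain Es where Es: "distinct Es" "set Es = {S \<in> Pow {1..m}. even (card S)}"
    using finite_distinct_list[of "{S \<in> Pow {1..m}. even (card S)}"] by auto
  let ?B = "R.exp_base ?C (Polynomials.degree (R.Irr K ?C))"
  have "set ?B \<subseteq> R.Span K ?B" by (rule R.Span_base_incl[OF K_subfield]) simp
  hence "set ?B \<subseteq> R.Span K (map (ymon y) Es)"
    using R.Span_exp_base[OF K_subfield _ EC_algebraic[OF m]] simple_extension_EC_sub_Span[OF m Es]
    by auto
  moreover have "R.independent K ?B"
    by (rule R.exp_base_independent[OF K_subfield _ EC_algebraic[OF m]]) simp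
  ultimately have "length ?B \<le> length (map (ymon y) Es)"
    by (intro R.independent_length_le_spanning[OF K_subfield]) simp_all
  moreover have "length (map (ymon y) Es) = 2 ^ (m - 1)"
    using distinct_card[OF Es(1)] Es(2) card_even_subsets[OF m1] by simp
  ultimately show ?thesis by (simp add: R.exp_base_def)
qed

text \<open>Lower bound: the minimal polynomial of EC m x y over K has the 2 ^ (m - 1) distinct
  conjugates obtained by flipping the signs of any set of the y j, 2 \<le> j \<le> m, as roots.\<close>
lemma Irr_EC_conjugate_root:
  assumes m: "m \<le> n"
  shows "R.is_root (R.Irr K (EC m x y)) (EC m x (\<lambda>j. flip_signs T j * y j))"
proof -
  let ?C = "EC m x y" and ?P = "R.Irr K (EC m x y)"
  have P: "?P \<in> carrier (univ_poly RR K)" by (rule R.IrrE(1)[OF K_subfield _ EC_algebraic[OF m]]) simp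
  hence PK: "set ?P \<subseteq> K" using R.polynomial_incl unfolding sym[OF univ_poly_carrier] by auto
  have "?P \<noteq> []"
    using R.IrrE(2)[OF K_subfield _ EC_algebraic[OF m]] unfolding ring_irreducible_def univ_poly_zero by auto
  moreover have "R.eval ?P (EC m x (\<lambda>j. flip_signs T j * y j)) = sign_map (flip_signs T) m (R.eval ?P ?C)"
    using sign_map_eval[OF signs_flip_signs m PK EC_in_tower[OF m]] sign_map_EC[OF signs_flip_signs m]
    by simp
  moreover have "R.eval ?P ?C = 0" using R.IrrE(4)[OF K_subfield _ EC_algebraic[OF m]] by simp
  ultimately show ?thesis unfolding R.is_root_def using sign_map_0[OF signs_flip_signs m] by simp
qed

lemma degree_Irr_EC_ge:
  assumes m: "m \<le> n"
  shows "2 ^ (m - 1) \<le> Polynomials.degree (R.Irr K (EC m x y))"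
proof -
  let ?P = "R.Irr K (EC m x y)"
  define r where "r T = EC m x (\<lambda>j. flip_signs T j * y j)" for T
  have P: "?P \<in> carrier (poly_ring RR)"
    using R.IrrE(1)[OF K_subfield _ EC_algebraic[OF m]] R.carrier_polynomial[OF subfieldE(1)[OF K_subfield]]
    unfolding sym[OF univ_poly_carrier] by auto
  have "inj_on r (Pow {2..m})" using EC_conjugates_distinct[OF m] by (auto simp: inj_on_def r_def)
  hence "2 ^ (m - 1) = card (r ` Pow {2..m})" by (simp add: card_image card_Pow)
  also have "\<dots> \<le> card (set_mset (R.roots ?P))"
    using R.roots_mem_iff_is_root[OF P] Irr_EC_conjugate_root[OF m] by (intro card_mono) (auto simp: r_def)
  also have "\<dots> \<le> size (R.roots ?P)" by (rule card_set_mset_le)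
  also have "\<dots> \<le> Polynomials.degree ?P" by (rule R.size_roots_le_degree[OF P])
  finally show ?thesis .
qed

theorem dimension_EC:
  assumes "1 \<le> m" and m: "m \<le> n"
  shows "R.dimension (2 ^ (m - 1)) K (R.simple_extension K (EC m x y))"
  using R.dimension_simple_extension[OF K_subfield _ EC_algebraic[OF m]]
    degree_Irr_EC_le[OF assms] degree_Irr_EC_ge[OF m] by simp

end

theorem mainTheorem13:
  fixes x y :: "nat \<Rightarrow> 'a::field_char_0" and m n :: nat
  assumes "1 \<le> m" and "m \<le> n"
    and "alg_indep_over_Q x {1..n}"
    and "\<And>j. j \<in> {1..n} \<Longrightarrow> (y j)\<^sup>2 = 1 - (x j)\<^sup>2"
  shows "ring.dimension (ring_of_type_algebra :: 'a ring) (2 ^ (m - 1))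
           (generate_field (ring_of_type_algebra :: 'a ring) (x ` {1..n}))
           (generate_field (ring_of_type_algebra :: 'a ring) (insert (EC m x y) (x ` {1..n})))"
proof -
  interpret R: field "RR::'a ring" by (rule field_from_type_algebra)
  define K where "K = generate_field RR (x ` {1..n})"
  have K_subfield: "subfield K RR" unfolding K_def by (rule R.generate_field_is_subfield) simp
  have x_in_K: "x j \<in> K" if "j \<in> {1..n}" for j
    using that unfolding K_def by (auto intro: generate_field.incl)
  have K_field: "field_closed K" using K_subfield subfield_iff_field_closed by blast
  interpret T: EC_tower K "\<lambda>j. 1 - x j ^ 2" y n x
  proof
    show "1 - x j ^ 2 \<in> K" if "j \<in> {1..n}" for j
      using K_field x_in_K[OF that] by (intro fc_diff fc_1 fc_power)
    show "u ^ 2 \<noteq> (\<Prod>i\<in>T. 1 - x i ^ 2)" if "T \<subseteq> {1..n}" "T \<noteq> {}" "u \<in> K" for T u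
      using prod_one_minus_sq_not_square[OF _ assms(3)] that by (simp add: K_def)
    show "x j \<noteq> 0" if "j \<in> {1..n}" for j using x_nonzero[OF _ that assms(3)] by simp
  qed (use K_field x_in_K assms(4) in auto)
  have "generate_field RR (insert (EC m x y) (x ` {1..n})) = R.simple_extension K (EC m x y)"
    unfolding K_def by (rule R.generate_field_insert) (use T.EC_algebraic[OF assms(2)] K_def in auto)
  thus ?thesis using T.dimension_EC[OF assms(1,2)] by (simp add: K_def)
qed

end
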